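(* Fix a dataset $\mathbb D_N$ and a point $x\in\mathcal X$. Let $\lambda_\dagger(x|\mathbb D_N)$ be the minimum eigenvalue of $\mathcal F(x|\mathbb D_N)=\beta^2\Sigma_{L_gB}(x|\mathbb D_N)-\widehat{L_gB}(x|\mathbb D_N)^T\widehat{L_gB}(x|\mathbb D_N)$. Then the GP-CBF-SOCP is feasible at $x$ if and only if $$\begin{bmatrix}\widehat{L_fB}+\gamma(B(x))\\ \widehat{L_gB}^T\end{bmatrix}^T\Sigma_B^{-1}\begin{bmatrix}\widehat{L_fB}+\gamma(B(x))\\ \widehat{L_gB}^T\end{bmatrix}\ge\beta^2$$ holds (all quantities evaluated at $(x|\mathbb D_N)$) and one of the following three cases holds: 1. $\lambda_\dagger(x|\mathbb D_N)<0$; 2. $\lambda_\dagger(x|\mathbb D_N)>0$ and $$\widehat{L_fB}+\gamma(B(x))-\widehat{L_gB}\,\mathcal F^{-1}\Big[\beta^2(\Sigma_{L_gB}^{1/2})^T\Sigma_{L_fB}^{1/2}-\widehat{L_gB}^T\big(\widehat{L_fB}+\gamma(B(x))\big)\Big]\ge0;$$ 3. $\lambda_\dagger(x|\mathbb D_N)=0$ and $$\widehat{L_fB}+\gamma(B(x))-\widehat{L_gB}\,\Sigma_{L_gB}^{-1}(\Sigma_{L_gB}^{1/2})^T\Sigma_{L_fB}^{1/2}>0.$$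
   Context: Consider $\dot x=f(x)+g(x)u$ with $x\in\mathcal X\subset\mathbb R^n$ and $u\in\mathbb R^m$, where $f,g$ are locally Lipschitz and unknown. A nominal model $\tilde f,\tilde g$ is available. Let $B:\mathcal X\to\mathbb R$ be $C^1$, let $\gamma$ be extended class-$\mathcal K_\infty$, and let $u_{\text{ref}}$ be a reference controller. Lie derivatives: $L_{\tilde f}B=\nabla B\,\tilde f$ and $L_{\tilde g}B=\nabla B\,\tilde g\in\mathbb R^{1\times m}$; $L_fB$ and $L_gB$ are defined similarly. Set $\Delta_B(x,u)=(L_fB-L_{\tilde f}B)(x)+(L_gB-L_{\tilde g}B)(x)u$. A dataset $\mathbb D_N=\{((x_j,u_j),z_j)\}$ consists of $z_j=\Delta_B(x_j,u_j)+\epsilon_j$. GP model with the affine dot product kernel $k_c((x,y),(x',y'))=y^T\mathrm{diag}(k_1(x,x'),\dots,k_{m+1}(x,x'))y'$: - Let $y_j=[1,u_j^T]^T$, $\mathbf z=(z_j)$, let $\sigma_n>0$, and let $K_c$ be the Gram matrix on the data. - Let $K_{**}(x)=\mathrm{diag}(k_i(x,x))$, and let $K_{*Y}(x)$ be the $(m+1)\times N$ matrix with entries $k_i(x,x_j)(y_j)_i$. - Define $m_B(x|\mathbb D_N)=K_{*Y}(K_c+\sigma_n^2I)^{-1}\mathbf z$ and $\Sigma_B(x|\mathbb D_N)=K_{**}-K_{*Y}(K_c+\sigma_n^2I)^{-1}K_{*Y}^T$, which is positive definite. - The posterior mean and standard deviation are $\mu_B(x,u|\mathbb D_N)=m_B^T[1;u]$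 and $\sigma_B=\sqrt{[1,u^T]\Sigma_B[1;u]}$. $\beta>0$ is a constant. Derived quantities: - $\widehat{L_fB}=L_{\tilde f}B+(m_B)_1$ and $\widehat{L_gB}=L_{\tilde g}B+((m_B)_2,\dots,(m_B)_{m+1})\in\mathbb R^{1\times m}$. - $\Sigma_B^{1/2}$ is the symmetric positive definite square root of $\Sigma_B$. - $\Sigma_{L_fB}^{1/2}\in\mathbb R^{m+1}$ is the first column of $\Sigma_B^{1/2}$, and $\Sigma_{L_gB}^{1/2}\in\mathbb R^{(m+1)\times m}$ consists of its columns $2,\dots,m+1$. - $\Sigma_{L_gB}=(\Sigma_{L_gB}^{1/2})^T\Sigma_{L_gB}^{1/2}$, which equals the lower-right $m\times m$ block of $\Sigma_B$. The GP-CBF-SOCP at $x$ is: minimize $\|u-u_{\text{ref}}(x)\|_2^2$ subject to $L_{\tilde f}B(x)+L_{\tilde g}B(x)u+\mu_B(x,u|\mathbb D_N)-\beta\sigma_B(x,u|\mathbb D_N)+\gamma(B(x))\ge0$. It is feasible at $x$ if this constraint set is nonempty. *)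

theory Defs
  imports "HOL-Analysis.Euclidean_Space" "Jordan_Normal_Form.Char_Poly"
begin

definition sym_mat :: "real mat \<Rightarrow> bool" where
  "sym_mat A \<longleftrightarrow> A \<in> carrier_mat (dim_row A) (dim_row A) \<and> transpose_mat A = A"

definition pos_def_mat :: "real mat \<Rightarrow> bool" where
  "pos_def_mat A \<longleftrightarrow> sym_mat A \<and>
     (\<forall>v \<in> carrier_vec (dim_row A). v \<noteq> 0\<^sub>v (dim_row A) \<longrightarrow> scalar_prod v (A *\<^sub>v v) > 0)"

text \<open>Inverse of a square matrix (meaningful when the matrix is invertible).\<close>
definition inv_of :: "real mat \<Rightarrow> real mat" where
  "inv_of A = (THE M. M \<in> carrier_mat (dim_row A) (dim_row A) \<and>
                      A * M = 1\<^sub>m (dim_row A) \<and> M * A = 1\<^sub>m (dim_row A))"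

definition sqrt_pd :: "real mat \<Rightarrow> real mat" where
  "sqrt_pd A = (THE S. S \<in> carrier_mat (dim_row A) (dim_row A) \<and> pos_def_mat S \<and> S * S = A)"

definition min_eigenvalue :: "real mat \<Rightarrow> real" where
  "min_eigenvalue A = Min {l. eigenvalue A l}"

definition ext_class_K_inf :: "(real \<Rightarrow> real) \<Rightarrow> bool" where
  "ext_class_K_inf \<gamma> \<longleftrightarrow> continuous_on UNIV \<gamma> \<and> strict_mono \<gamma> \<and> \<gamma> 0 = 0 \<and>
     filterlim \<gamma> at_top at_top \<and> filterlim \<gamma> at_bot at_bot"

(* ---------- GP model with the affine dot product kernel ----------
   m  : input dimension;  y = [1; u] has dimension m+1 (index 0 is the "1" entry)
   k  : kernels k_1..k_{m+1}, here indexed k 0 .. k m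
   xs, us : data points x_j, u_j (j < N);  z : vector of measurements (dim N)  *)

definition yvec :: "real vec \<Rightarrow> real vec" where
  "yvec u = vCons 1 u"

definition gram_Kc :: "nat \<Rightarrow> (nat \<Rightarrow> 'a \<Rightarrow> 'a \<Rightarrow> real) \<Rightarrow> nat \<Rightarrow> (nat \<Rightarrow> 'a) \<Rightarrow> (nat \<Rightarrow> real vec) \<Rightarrow> real mat" where
  "gram_Kc m k N xs us = mat N N (\<lambda>(j, l).
      \<Sum>i<m+1. yvec (us j) $ i * k i (xs j) (xs l) * yvec (us l) $ i)"

definition K_ss :: "nat \<Rightarrow> (nat \<Rightarrow> 'a \<Rightarrow> 'a \<Rightarrow> real) \<Rightarrow> 'a \<Rightarrow> real mat" where
  "K_ss m k x = mat (m+1) (m+1) (\<lambda>(i, i'). if i = i' then k i x x else 0)"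

definition K_sY :: "nat \<Rightarrow> (nat \<Rightarrow> 'a \<Rightarrow> 'a \<Rightarrow> real) \<Rightarrow> nat \<Rightarrow> (nat \<Rightarrow> 'a) \<Rightarrow> (nat \<Rightarrow> real vec) \<Rightarrow> 'a \<Rightarrow> real mat" where
  "K_sY m k N xs us x = mat (m+1) N (\<lambda>(i, j). k i x (xs j) * yvec (us j) $ i)"

definition m_B :: "nat \<Rightarrow> (nat \<Rightarrow> 'a \<Rightarrow> 'a \<Rightarrow> real) \<Rightarrow> real \<Rightarrow> nat \<Rightarrow> (nat \<Rightarrow> 'a) \<Rightarrow> (nat \<Rightarrow> real vec) \<Rightarrow> real vec \<Rightarrow> 'a \<Rightarrow> real vec" where
  "m_B m k \<sigma>n N xs us z x =
     K_sY m k N xs us x *\<^sub>v (inv_of (gram_Kc m k N xs us + \<sigma>n\<^sup>2 \<cdot>\<^sub>m 1\<^sub>m N) *\<^sub>v z)"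

definition Sigma_B :: "nat \<Rightarrow> (nat \<Rightarrow> 'a \<Rightarrow> 'a \<Rightarrow> real) \<Rightarrow> real \<Rightarrow> nat \<Rightarrow> (nat \<Rightarrow> 'a) \<Rightarrow> (nat \<Rightarrow> real vec) \<Rightarrow> 'a \<Rightarrow> real mat" where
  "Sigma_B m k \<sigma>n N xs us x =
     K_ss m k x - K_sY m k N xs us x * inv_of (gram_Kc m k N xs us + \<sigma>n\<^sup>2 \<cdot>\<^sub>m 1\<^sub>m N)
                   * transpose_mat (K_sY m k N xs us x)"

definition mu_B where
  "mu_B m k \<sigma>n N xs us z x u = scalar_prod (m_B m k \<sigma>n N xs us z x) (yvec u)"

definition sigma_B where
  "sigma_B m k \<sigma>n N xs us x u =
     sqrt (scalar_prod (yvec u) (Sigma_B m k \<sigma>n N xs us x *\<^sub>v yvec u))"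

(* ---------- Lie derivatives of B along the nominal model ----------
   DB is the (Frechet) derivative of B at x, i.e. DB v = \<nabla>B(x) v.
   gt x is the n x m matrix \<tilde>g(x) given by its columns gt x 0, ..., gt x (m-1). *)

definition Lie_ft :: "('a \<Rightarrow> real) \<Rightarrow> ('a \<Rightarrow> 'a) \<Rightarrow> 'a \<Rightarrow> real" where
  "Lie_ft DB ft x = DB (ft x)"

definition Lie_gt :: "nat \<Rightarrow> ('a \<Rightarrow> real) \<Rightarrow> ('a \<Rightarrow> nat \<Rightarrow> 'a) \<Rightarrow> 'a \<Rightarrow> real vec" where
  "Lie_gt m DB gt x = vec m (\<lambda>i. DB (gt x i))"

definition socp_constraint where
  "socp_constraint m k \<sigma>n N xs us z \<beta> \<gamma> B DB ft gt x u \<longleftrightarrow>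
     Lie_ft DB ft x + scalar_prod (Lie_gt m DB gt x) u + mu_B m k \<sigma>n N xs us z x u
       - \<beta> * sigma_B m k \<sigma>n N xs us x u + \<gamma> (B x) \<ge> 0"

definition socp_feasible where
  "socp_feasible m k \<sigma>n N xs us z \<beta> \<gamma> B DB ft gt x \<longleftrightarrow>
     (\<exists>u \<in> carrier_vec m. socp_constraint m k \<sigma>n N xs us z \<beta> \<gamma> B DB ft gt x u)"

definition LfB_hat where
  "LfB_hat m k \<sigma>n N xs us z DB ft x = Lie_ft DB ft x + m_B m k \<sigma>n N xs us z x $ 0"

definition LgB_hat where
  "LgB_hat m k \<sigma>n N xs us z DB gt x =
     Lie_gt m DB gt x + vec m (\<lambda>i. m_B m k \<sigma>n N xs us z x $ (i+1))"

definition Sig_LfB_half where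
  "Sig_LfB_half m k \<sigma>n N xs us x = col (sqrt_pd (Sigma_B m k \<sigma>n N xs us x)) 0"

definition Sig_LgB_half where
  "Sig_LgB_half m k \<sigma>n N xs us x =
     mat (m+1) m (\<lambda>(i, j). sqrt_pd (Sigma_B m k \<sigma>n N xs us x) $$ (i, j+1))"

definition Sig_LgB where
  "Sig_LgB m k \<sigma>n N xs us x =
     transpose_mat (Sig_LgB_half m k \<sigma>n N xs us x) * Sig_LgB_half m k \<sigma>n N xs us x"

definition F_mat where
  "F_mat m k \<sigma>n N xs us z \<beta> DB gt x =
     \<beta>\<^sup>2 \<cdot>\<^sub>m Sig_LgB m k \<sigma>n N xs us x
     - mat m m (\<lambda>(i, j). LgB_hat m k \<sigma>n N xs us z DB gt x $ i * LgB_hat m k \<sigma>n N xs us z DB gt x $ j)"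

end

theory Submission
  imports Defs "Jordan_Normal_Form.Schur_Decomposition" "HOL-Real_Asymp.Real_Asymp"
begin

(* With y = vCons 1 u and w = vCons a b, where a = LfB_hat + gamma (B x) and b = LgB_hat, the
   constraint reads w y >= beta sqrt (y Sigma y), i.e. w y >= 0 and
   H y = (w y)^2 - beta^2 (y Sigma y) >= 0. On the hyperplane y = vCons 1 u, H is a quadratic
   in u with quadratic part - u F u.

   If F has a negative eigenvalue, H and w y grow without bound along an eigenvector ray.
   If F is positive definite, H (vCons 1 u) is maximal at u_opt = - F^-1 p. Feasibility forces
   a + b u_opt >= 0, by concavity along the segment towards a feasible point, and conversely
   H (vCons 1 u_opt) >= 0 as soon as H is nonnegative somewhere off the hyperplane y_0 = 0;
   by Cauchy-Schwarz this is the condition w Sigma^-1 w >= beta^2, which is necessary in all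
   cases. If 0 is the least eigenvalue of F, a kernel vector d, normalised to Sigma_22 d = b,
   spans a ray along which H grows linearly with slope proportional to a - s12 d; strict
   Cauchy-Schwarz applied to vCons 0 d shows that a feasible point forces this slope to be
   positive. *)

section \<open>Quadratic forms\<close>

lemma nonzero_vec_index:
  assumes "v \<in> carrier_vec n" and "v \<noteq> 0\<^sub>v n"
  obtains i where "i < n" and "v $ i \<noteq> 0"
  using assms by (metis eq_vecI carrier_vecD index_zero_vec)

lemma real_scalar_prod_self_pos:
  fixes v :: "real vec"
  assumes "v \<in> carrier_vec n" and "v \<noteq> 0\<^sub>v n"
  shows "v \<bullet> v > 0"
  using conjugate_square_greater_0_vec[OF assms(1)] assms(2) by simp

lemma mult_mat_vec_zero [simp]:
  "A \<in> carrier_mat n m \<Longrightarrow> A *\<^sub>v 0\<^sub>v m = 0\<^sub>v n"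
  by (intro eq_vecI) auto

lemma mult_mat_vec_uminus:
  fixes A :: "'a::ring mat"
  shows "A \<in> carrier_mat n m \<Longrightarrow> v \<in> carrier_vec m \<Longrightarrow> A *\<^sub>v (- v) = - (A *\<^sub>v v)"
  by (intro eq_vecI) (auto simp: scalar_prod_uminus_right)

lemma transpose_conj_mat:
  fixes Q X :: "real mat"
  assumes Q: "Q \<in> carrier_mat n n" and X: "X \<in> carrier_mat n n"
  shows "(Q * X * Q\<^sup>T)\<^sup>T = Q * X\<^sup>T * Q\<^sup>T"
  using Q X by (simp add: transpose_mult[of _ n n _ n] assoc_mult_mat[of _ n n _ n _ n])

lemma sym_bilinear_comm:
  fixes A :: "real mat"
  assumes A: "A \<in> carrier_mat n n" and sym: "A\<^sup>T = A"
    and x: "x \<in> carrier_vec n" and y: "y \<in> carrier_vec n"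
  shows "x \<bullet> (A *\<^sub>v y) = y \<bullet> (A *\<^sub>v x)"
  using transpose_vec_mult_scalar[OF A y x] sym comm_scalar_prod[OF mult_mat_vec_carrier[OF A x] y]
  by simp

lemma sym_quadratic_form_add:
  fixes A :: "real mat"
  assumes A: "A \<in> carrier_mat n n" and sym: "A\<^sup>T = A"
    and x: "x \<in> carrier_vec n" and y: "y \<in> carrier_vec n"
  shows "(x + y) \<bullet> (A *\<^sub>v (x + y)) = x \<bullet> (A *\<^sub>v x) + 2 * (x \<bullet> (A *\<^sub>v y)) + y \<bullet> (A *\<^sub>v y)"
  using sym_bilinear_comm[OF A sym x y] A x y
  by (simp add: mult_add_distrib_mat_vec[OF A x y] add_scalar_prod_distrib[of _ n]
      scalar_prod_add_distrib[of _ n])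

lemma quadratic_form_smult:
  fixes A :: "real mat"
  assumes A: "A \<in> carrier_mat n n" and x: "x \<in> carrier_vec n"
  shows "(t \<cdot>\<^sub>v x) \<bullet> (A *\<^sub>v (t \<cdot>\<^sub>v x)) = t\<^sup>2 * (x \<bullet> (A *\<^sub>v x))"
  using A x by (simp add: mult_mat_vec power2_eq_square scalar_prod_smult_distrib[of _ n]
      smult_scalar_prod_distrib[of _ n])

lemma sym_quadratic_form_add_smult:
  fixes A :: "real mat"
  assumes A: "A \<in> carrier_mat n n" "A\<^sup>T = A" and x: "x \<in> carrier_vec n" and y: "y \<in> carrier_vec n"
  shows "(x + t \<cdot>\<^sub>v y) \<bullet> (A *\<^sub>v (x + t \<cdot>\<^sub>v y))
    = x \<bullet> (A *\<^sub>v x) + 2 * t * (x \<bullet> (A *\<^sub>v y)) + t\<^sup>2 * (y \<bullet> (A *\<^sub>v y))"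
proof -
  have ty: "t \<cdot>\<^sub>v y \<in> carrier_vec n" using y by simp
  have "x \<bullet> (A *\<^sub>v (t \<cdot>\<^sub>v y)) = t * (x \<bullet> (A *\<^sub>v y))" using A x y by (simp add: mult_mat_vec)
  then show ?thesis
    using sym_quadratic_form_add[OF A x ty] quadratic_form_smult[OF A(1) y]
    by (simp add: mult.assoc)
qed

lemma diagonal_mat_mult_vec_index:
  fixes D :: "real mat"
  assumes D: "D \<in> carrier_mat n n" and diag: "diagonal_mat D"
    and w: "w \<in> carrier_vec n" and i: "i < n"
  shows "(D *\<^sub>v w) $ i = D $$ (i, i) * w $ i"
proof -
  have "(D *\<^sub>v w) $ i = (\<Sum>j\<in>{0..<n}. D $$ (i, j) * w $ j)"
    using D w i by (simp add: mult_mat_vec_def scalar_prod_def)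
  also have "\<dots> = D $$ (i, i) * w $ i"
    using diag D i unfolding diagonal_mat_def
    by (subst sum.remove[of _ i]) (auto intro: sum.neutral)
  finally show ?thesis .
qed

section \<open>Orthogonal diagonalisation of real symmetric matrices\<close>

lemma real_mat_complex_eigenvector_parts:
  fixes A :: "real mat"
  assumes A: "A \<in> carrier_mat n n" and vc: "vc \<in> carrier_vec n"
    and eigen: "map_mat complex_of_real A *\<^sub>v vc = c \<cdot>\<^sub>v vc"
  shows "A *\<^sub>v map_vec Re vc = Re c \<cdot>\<^sub>v map_vec Re vc - Im c \<cdot>\<^sub>v map_vec Im vc"
    and "A *\<^sub>v map_vec Im vc = Im c \<cdot>\<^sub>v map_vec Re vc + Re c \<cdot>\<^sub>v map_vec Im vc"
proof -
  have index: "c * vc $ i = (\<Sum>j<n. complex_of_real (A $$ (i, j)) * vc $ j)" if "i < n" for i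
    using arg_cong[OF eigen, of "\<lambda>v. v $ i"] that A vc
    by (simp add: mult_mat_vec_def scalar_prod_def row_def lessThan_atLeast0)
  have real_index: "(A *\<^sub>v v) $ i = (\<Sum>j<n. A $$ (i, j) * v $ j)"
    if "i < n" "v \<in> carrier_vec n" for i v
    using that A by (simp add: mult_mat_vec_def scalar_prod_def row_def lessThan_atLeast0)
  show "A *\<^sub>v map_vec Re vc = Re c \<cdot>\<^sub>v map_vec Re vc - Im c \<cdot>\<^sub>v map_vec Im vc"
  proof (rule eq_vecI)
    fix i assume "i < dim_vec (Re c \<cdot>\<^sub>v map_vec Re vc - Im c \<cdot>\<^sub>v map_vec Im vc)"
    then have i: "i < n" using vc by simp
    show "(A *\<^sub>v map_vec Re vc) $ i = (Re c \<cdot>\<^sub>v map_vec Re vc - Im c \<cdot>\<^sub>v map_vec Im vc) $ i"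
      using arg_cong[OF index[OF i], of Re] i vc by (simp add: real_index Re_sum)
  qed (use A vc in simp)
  show "A *\<^sub>v map_vec Im vc = Im c \<cdot>\<^sub>v map_vec Re vc + Re c \<cdot>\<^sub>v map_vec Im vc"
  proof (rule eq_vecI)
    fix i assume "i < dim_vec (Im c \<cdot>\<^sub>v map_vec Re vc + Re c \<cdot>\<^sub>v map_vec Im vc)"
    then have i: "i < n" using vc by simp
    show "(A *\<^sub>v map_vec Im vc) $ i = (Im c \<cdot>\<^sub>v map_vec Re vc + Re c \<cdot>\<^sub>v map_vec Im vc) $ i"
      using arg_cong[OF index[OF i], of Im] i vc by (simp add: real_index Im_sum)
  qed (use A vc in simp)
qed

text \<open>Take a complex eigenvector x + i y. Symmetry gives Im c (x x + y y) = 0, so the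
  eigenvalue c is real and whichever of x, y is nonzero is a real eigenvector.\<close>
lemma sym_mat_real_eigenvector_exists:
  fixes A :: "real mat"
  assumes A: "A \<in> carrier_mat n n" and sym: "A\<^sup>T = A" and n: "n > 0"
  obtains e v where "v \<in> carrier_vec n" "v \<noteq> 0\<^sub>v n" "A *\<^sub>v v = e \<cdot>\<^sub>v v"
proof -
  define Ac where "Ac = map_mat complex_of_real A"
  have Ac: "Ac \<in> carrier_mat n n" using A unfolding Ac_def by simp
  obtain cs where cp: "char_poly Ac = (\<Prod>c\<leftarrow>cs. [:- c, 1:])" and "length cs = n"
    using char_poly_factorized[OF Ac] by blast
  then obtain c cs' where "cs = c # cs'" using n by (cases cs) auto
  then have "eigenvalue Ac c" using eigenvalue_root_char_poly[OF Ac] cp by simp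
  then obtain vc where vc: "vc \<in> carrier_vec n" "vc \<noteq> 0\<^sub>v n" "Ac *\<^sub>v vc = c \<cdot>\<^sub>v vc"
    unfolding eigenvalue_def eigenvector_def using Ac by auto
  define x where "x = map_vec Re vc"
  define y where "y = map_vec Im vc"
  have x: "x \<in> carrier_vec n" and y: "y \<in> carrier_vec n" using vc unfolding x_def y_def by auto
  note parts =
    real_mat_complex_eigenvector_parts[OF A vc(1) vc(3)[unfolded Ac_def], folded x_def y_def]
  have xy: "x \<noteq> 0\<^sub>v n \<or> y \<noteq> 0\<^sub>v n"
    using vc unfolding x_def y_def
    by (metis complex_eqI eq_vecI carrier_vecD index_map_vec index_zero_vec zero_complex.simps)
  have "0 \<le> v \<bullet> v" for v :: "real vec" using conjugate_square_ge_0_vec[of v] by simp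
  then have "x \<bullet> x + y \<bullet> y > 0"
    using xy real_scalar_prod_self_pos[OF x] real_scalar_prod_self_pos[OF y]
    by (auto intro: add_pos_nonneg add_nonneg_pos)
  moreover have "Im c * (x \<bullet> x + y \<bullet> y) = 0"
    using sym_bilinear_comm[OF A sym y x] comm_scalar_prod[OF x y] x y
    unfolding parts by (simp add: scalar_prod_add_distrib scalar_prod_minus_distrib algebra_simps)
  ultimately have "Im c = 0" by simp
  then have "A *\<^sub>v x = Re c \<cdot>\<^sub>v x" "A *\<^sub>v y = Re c \<cdot>\<^sub>v y"
    using parts x y by (auto intro!: eq_vecI)
  then show ?thesis using that xy x y by blast
qed

lemma orthonormal_completion:
  fixes v :: "real vec"
  assumes v: "v \<in> carrier_vec n" and v1: "v \<bullet> v = 1"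
  obtains W where "W \<in> carrier_mat n n" "W\<^sup>T * W = 1\<^sub>m n" "col W 0 = v"
proof -
  have v0: "v \<noteq> 0\<^sub>v n" using v1 v by auto
  then have n: "n > 0" using v by (cases n) auto
  interpret cof_vec_space n "TYPE(real)" .
  define bs where "bs = basis_completion v"
  from basis_completion[OF v v0, folded bs_def]
  have dist: "distinct bs" and indep: "\<not> lin_dep (set bs)" and bs: "set bs \<subseteq> carrier_vec n"
    and hd_bs: "hd bs = v" and len_bs: "length bs = n" by auto
  from hd_bs len_bs n obtain bs' where bs_eq: "bs = v # bs'" by (cases bs) auto
  define ws where "ws = gram_schmidt n bs"
  from gram_schmidt_result[OF bs dist indep ws_def]
  have ws: "set ws \<subseteq> carrier_vec n" "corthogonal ws" "length ws = n" by (auto simp: len_bs)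
  have "hd ws = v" unfolding ws_def bs_eq using v by simp
  then have ws0: "ws ! 0 = v" using ws(3) n by (cases ws) auto
  have ws_pos: "ws ! i \<bullet> ws ! i > 0" if "i < n" for i
    using corthogonalD[OF ws(2), of i i] that ws conjugate_square_ge_0_vec[of "ws ! i"] by auto
  define us where "us = map (\<lambda>w. (1 / sqrt (w \<bullet> w)) \<cdot>\<^sub>v w) ws"
  have us: "set us \<subseteq> carrier_vec n" "length us = n" using ws unfolding us_def by auto
  have us_orth: "us ! i \<bullet> us ! j = (if i = j then 1 else 0)" if "i < n" "j < n" for i j
  proof -
    have "ws ! i \<in> carrier_vec n" "ws ! j \<in> carrier_vec n" using ws that by auto
    then have "us ! i \<bullet> us ! j
        = (ws ! i \<bullet> ws ! j) / (sqrt (ws ! i \<bullet> ws ! i) * sqrt (ws ! j \<bullet> ws ! j))"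
      unfolding us_def using that ws
      by (simp add: smult_scalar_prod_distrib scalar_prod_smult_distrib)
    then show ?thesis
      using corthogonalD[OF ws(2), of i j] ws_pos[of i] that ws
      by (auto simp: real_sqrt_mult[symmetric])
  qed
  define W where "W = mat_of_cols n us"
  have W: "W \<in> carrier_mat n n" unfolding W_def using mat_of_cols_carrier(1)[of n us] us by simp
  have col_W: "col W j = us ! j" if "j < n" for j
    unfolding W_def using that us by (simp add: col_mat_of_cols subset_code(1))
  have "W\<^sup>T * W = 1\<^sub>m n" by (rule eq_matI) (use W col_W us_orth in auto)
  moreover have "col W 0 = v" using col_W[OF n] ws0 v1 ws n unfolding us_def by simp
  ultimately show ?thesis using that W by blast
qed

text \<open>Completing a unit eigenvector to an orthonormal basis splits off a 1 x 1 block.\<close>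
lemma sym_mat_deflation:
  fixes A :: "real mat"
  assumes A: "A \<in> carrier_mat (Suc k) (Suc k)" and sym: "A\<^sup>T = A"
  obtains W e A' where "W \<in> carrier_mat (Suc k) (Suc k)" "W\<^sup>T * W = 1\<^sub>m (Suc k)"
    "A' \<in> carrier_mat k k" "A'\<^sup>T = A'"
    "A = W * four_block_mat (mat 1 1 (\<lambda>_. e)) (0\<^sub>m 1 k) (0\<^sub>m k 1) A' * W\<^sup>T"
proof -
  obtain e v0 where v0: "v0 \<in> carrier_vec (Suc k)" "v0 \<noteq> 0\<^sub>v (Suc k)" "A *\<^sub>v v0 = e \<cdot>\<^sub>v v0"
    using sym_mat_real_eigenvector_exists[OF A sym zero_less_Suc] by blast
  define v where "v = (1 / sqrt (v0 \<bullet> v0)) \<cdot>\<^sub>v v0"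
  have v: "v \<in> carrier_vec (Suc k)" using v0 unfolding v_def by simp
  have "v \<bullet> v = 1" unfolding v_def using v0 real_scalar_prod_self_pos[OF v0(1,2)]
    by (simp add: smult_scalar_prod_distrib scalar_prod_smult_distrib)
  then obtain W where W: "W \<in> carrier_mat (Suc k) (Suc k)" and WW: "W\<^sup>T * W = 1\<^sub>m (Suc k)"
    and W_col: "col W 0 = v"
    using orthonormal_completion[OF v] by blast
  have Av: "A *\<^sub>v v = e \<cdot>\<^sub>v v"
    unfolding v_def using v0 A by (simp add: mult_mat_vec smult_smult_assoc mult.commute)
  define B where "B = W\<^sup>T * A * W"
  have B: "B \<in> carrier_mat (Suc k) (Suc k)" unfolding B_def using W A by auto
  have B_sym: "B\<^sup>T = B" unfolding B_def using transpose_conj_mat[of "W\<^sup>T" "Suc k" A] W A sym by simp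
  have "col B 0 = W\<^sup>T *\<^sub>v (A *\<^sub>v col W 0)"
    unfolding B_def using col_mult2[of "W\<^sup>T * A" "Suc k" "Suc k" W "Suc k" 0]
      assoc_mult_mat_vec[of "W\<^sup>T" "Suc k" "Suc k" A "Suc k" "col W 0"] W A v W_col by simp
  also have "\<dots> = e \<cdot>\<^sub>v (W\<^sup>T *\<^sub>v col W 0)" unfolding W_col Av using W v by (simp add: mult_mat_vec)
  also have "W\<^sup>T *\<^sub>v col W 0 = col (W\<^sup>T * W) 0"
    using col_mult2[of "W\<^sup>T" "Suc k" "Suc k" W "Suc k" 0] W by simp
  finally have B_col: "col B 0 = e \<cdot>\<^sub>v unit_vec (Suc k) 0" unfolding WW by simp
  have B_0: "B $$ (i, 0) = (if i = 0 then e else 0)" "B $$ (0, i) = (if i = 0 then e else 0)"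
    if "i < Suc k" for i
    using arg_cong[OF B_col, of "\<lambda>x. x $ i"] that B B_sym
    by (auto simp: unit_vec_def) (metis carrier_matD index_transpose_mat(1) zero_less_Suc)
  define A' where "A' = mat k k (\<lambda>(i, j). B $$ (Suc i, Suc j))"
  have "A'\<^sup>T = A'" unfolding A'_def using B_sym B
    by (intro eq_matI) (auto, metis Suc_less_eq carrier_matD index_transpose_mat(1))
  moreover have "B = four_block_mat (mat 1 1 (\<lambda>_. e)) (0\<^sub>m 1 k) (0\<^sub>m k 1) A'"
    by (rule eq_matI) (use B B_0 in \<open>auto simp: four_block_mat_def A'_def\<close>)
  moreover have "A = W * B * W\<^sup>T"
  proof -
    have WW': "W * W\<^sup>T = 1\<^sub>m (Suc k)" using mat_mult_left_right_inverse[OF _ W WW] W by simp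
    have "W * B * W\<^sup>T = (W * W\<^sup>T) * A * (W * W\<^sup>T)" unfolding B_def
      using W A by (simp add: assoc_mult_mat[of _ "Suc k" "Suc k" _ "Suc k" _ "Suc k"])
    then show ?thesis unfolding WW' using A by simp
  qed
  moreover have "A' \<in> carrier_mat k k" unfolding A'_def by simp
  ultimately show ?thesis by (intro that[OF W WW]) simp_all
qed

locale orthogonal_diag =
  fixes A Q D :: "real mat" and n :: nat
  assumes Q_carrier: "Q \<in> carrier_mat n n" and D_carrier: "D \<in> carrier_mat n n"
    and diagonal: "diagonal_mat D"
    and orthogonal: "Q\<^sup>T * Q = 1\<^sub>m n"
    and decomp: "A = Q * D * Q\<^sup>T"

lemma orthogonal_diag_four_block:
  assumes "orthogonal_diag A Q D k"
  shows "orthogonal_diag (four_block_mat (mat 1 1 (\<lambda>_. e)) (0\<^sub>m 1 k) (0\<^sub>m k 1) A)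
    (four_block_mat (1\<^sub>m 1) (0\<^sub>m 1 k) (0\<^sub>m k 1) Q)
    (four_block_mat (mat 1 1 (\<lambda>_. e)) (0\<^sub>m 1 k) (0\<^sub>m k 1) D)
    (Suc k)"
proof -
  interpret orthogonal_diag A Q D k by fact
  define E :: "real mat" where "E = mat 1 1 (\<lambda>_. e)"
  define Q' where "Q' = four_block_mat (1\<^sub>m 1) (0\<^sub>m 1 k) (0\<^sub>m k 1) Q"
  define D' where "D' = four_block_mat E (0\<^sub>m 1 k) (0\<^sub>m k 1) D"
  have Q'T: "Q'\<^sup>T = four_block_mat (1\<^sub>m 1) (0\<^sub>m 1 k) (0\<^sub>m k 1) Q\<^sup>T"
    unfolding Q'_def using Q_carrier by (subst transpose_four_block_mat) auto
  have "Q' \<in> carrier_mat (Suc k) (Suc k)" unfolding Q'_def using Q_carrier by auto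
  moreover have "D' \<in> carrier_mat (Suc k) (Suc k)" unfolding D'_def E_def using D_carrier by auto
  moreover have "diagonal_mat D'"
    using diagonal D_carrier unfolding diagonal_mat_def
    by (auto simp: four_block_mat_def D'_def E_def)
  moreover have "Q'\<^sup>T * Q' = 1\<^sub>m (Suc k)"
  proof -
    have "Q'\<^sup>T * Q' = four_block_mat (1\<^sub>m 1) (0\<^sub>m 1 k) (0\<^sub>m k 1) (1\<^sub>m k)"
      unfolding Q'T unfolding Q'_def using Q_carrier orthogonal by (subst mult_four_block_mat) auto
    also have "\<dots> = 1\<^sub>m (Suc k)" by (rule eq_matI) (auto simp: four_block_mat_def)
    finally show ?thesis .
  qed
  moreover have "four_block_mat E (0\<^sub>m 1 k) (0\<^sub>m k 1) A = Q' * D' * Q'\<^sup>T"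
  proof -
    have QD: "Q' * D' = four_block_mat E (0\<^sub>m 1 k) (0\<^sub>m k 1) (Q * D)"
      unfolding Q'_def D'_def E_def using Q_carrier D_carrier by (subst mult_four_block_mat) auto
    show ?thesis
      unfolding Q'T QD unfolding decomp E_def using Q_carrier D_carrier
      by (subst mult_four_block_mat) auto
  qed
  ultimately show ?thesis unfolding E_def Q'_def D'_def by (rule orthogonal_diag.intro)
qed

lemma orthogonal_diag_conj:
  assumes "orthogonal_diag A Q D n" and W: "W \<in> carrier_mat n n" and WW: "W\<^sup>T * W = 1\<^sub>m n"
  shows "orthogonal_diag (W * A * W\<^sup>T) (W * Q) D n"
proof -
  interpret orthogonal_diag A Q D n by fact
  have WQ_T: "(W * Q)\<^sup>T = Q\<^sup>T * W\<^sup>T" by (rule transpose_mult) (use W Q_carrier in auto)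
  have "W * Q \<in> carrier_mat n n" using W Q_carrier by simp
  moreover have "(W * Q)\<^sup>T * (W * Q) = 1\<^sub>m n"
  proof -
    have "(W * Q)\<^sup>T * (W * Q) = Q\<^sup>T * (W\<^sup>T * W) * Q"
      unfolding WQ_T using W Q_carrier by (simp add: assoc_mult_mat[of _ n n _ n _ n])
    then show ?thesis using WW orthogonal Q_carrier by simp
  qed
  moreover have "W * A * W\<^sup>T = (W * Q) * D * (W * Q)\<^sup>T"
    unfolding decomp WQ_T using W Q_carrier D_carrier
    by (simp add: assoc_mult_mat[of _ n n _ n _ n])
  ultimately show ?thesis using D_carrier diagonal by (intro orthogonal_diag.intro)
qed

lemma sym_mat_orthogonal_diag:
  fixes A :: "real mat"
  assumes "A \<in> carrier_mat n n" and "A\<^sup>T = A"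
  shows "\<exists>Q D. orthogonal_diag A Q D n"
  using assms
proof (induction n arbitrary: A)
  case 0
  then show ?case
    by (intro exI[of _ "1\<^sub>m 0"]) (auto simp: orthogonal_diag_def diagonal_mat_def intro!: eq_matI)
next
  case (Suc k)
  obtain W e A' where W: "W \<in> carrier_mat (Suc k) (Suc k)" "W\<^sup>T * W = 1\<^sub>m (Suc k)"
    and A': "A' \<in> carrier_mat k k" "A'\<^sup>T = A'"
    and A: "A = W * four_block_mat (mat 1 1 (\<lambda>_. e)) (0\<^sub>m 1 k) (0\<^sub>m k 1) A' * W\<^sup>T"
    using sym_mat_deflation[OF Suc.prems] .
  obtain Q D where "orthogonal_diag A' Q D k" using Suc.IH[OF A'] by blast
  then show ?case
    unfolding A using orthogonal_diag_conj[OF orthogonal_diag_four_block W] by blast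
qed

context orthogonal_diag
begin

lemma A_carrier: "A \<in> carrier_mat n n"
  using Q_carrier D_carrier decomp by simp

lemma orthogonal_right: "Q * Q\<^sup>T = 1\<^sub>m n"
  using mat_mult_left_right_inverse[OF _ Q_carrier orthogonal] Q_carrier by simp

lemma transpose_mult_vec_nonzero:
  assumes v: "v \<in> carrier_vec n" "v \<noteq> 0\<^sub>v n"
  shows "Q\<^sup>T *\<^sub>v v \<noteq> 0\<^sub>v n"
proof
  assume "Q\<^sup>T *\<^sub>v v = 0\<^sub>v n"
  then have "(Q * Q\<^sup>T) *\<^sub>v v = 0\<^sub>v n"
    using Q_carrier v by (simp add: assoc_mult_mat_vec[of _ n n _ n])
  then show False using orthogonal_right v by simp
qed

lemma quadratic_form:
  assumes v: "v \<in> carrier_vec n"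
  shows "v \<bullet> (A *\<^sub>v v) = (\<Sum>i<n. D $$ (i, i) * ((Q\<^sup>T *\<^sub>v v) $ i)\<^sup>2)"
proof -
  define w where "w = Q\<^sup>T *\<^sub>v v"
  have w: "w \<in> carrier_vec n" unfolding w_def using Q_carrier v by simp
  have "v \<bullet> (A *\<^sub>v v) = v \<bullet> (Q *\<^sub>v (D *\<^sub>v w))"
    unfolding decomp w_def using Q_carrier D_carrier v
    by (simp add: assoc_mult_mat_vec[of _ n n _ n])
  also have "\<dots> = w \<bullet> (D *\<^sub>v w)"
    unfolding w_def using transpose_vec_mult_scalar[OF Q_carrier _ v] D_carrier w w_def by simp
  also have "\<dots> = (\<Sum>i<n. D $$ (i, i) * (w $ i)\<^sup>2)"
    unfolding scalar_prod_def using w D_carrier diagonal_mat_mult_vec_index[OF D_carrier diagonal w]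
    by (intro sum.cong) (auto simp: power2_eq_square lessThan_atLeast0)
  finally show ?thesis unfolding w_def .
qed

lemma eigenvector_col:
  assumes i: "i < n"
  shows "eigenvector A (col Q i) (D $$ (i, i))"
proof -
  have AQ: "A * Q = Q * D"
    unfolding decomp using Q_carrier D_carrier orthogonal
    by (simp add: assoc_mult_mat[of _ n n _ n _ n])
  have "col D i = D $$ (i, i) \<cdot>\<^sub>v unit_vec n i"
    using D_carrier diagonal i unfolding diagonal_mat_def
    by (intro eq_vecI) (auto simp: unit_vec_def)
  then have "A *\<^sub>v col Q i = D $$ (i, i) \<cdot>\<^sub>v col Q i"
    using col_mult2[of A n n Q n i] col_mult2[of Q n n D n i] col_mult2[of Q n n "1\<^sub>m n" n i]
      A_carrier Q_carrier D_carrier i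
    by (simp add: AQ mult_mat_vec)
  moreover have "col Q i \<noteq> 0\<^sub>v n"
  proof
    assume "col Q i = 0\<^sub>v n"
    then have "col (Q\<^sup>T * Q) i = 0\<^sub>v n"
      using col_mult2[of "Q\<^sup>T" n n Q n i] Q_carrier i by simp
    then show False using orthogonal i
      by (metis col_one index_unit_vec(1) index_zero_vec(1) zero_neq_one)
  qed
  ultimately show ?thesis unfolding eigenvector_def using A_carrier Q_carrier i by auto
qed

lemma eigenvalue_diag_entry:
  assumes "eigenvalue A l"
  obtains i where "i < n" "l = D $$ (i, i)"
proof -
  obtain v where v: "v \<in> carrier_vec n" "v \<noteq> 0\<^sub>v n" "A *\<^sub>v v = l \<cdot>\<^sub>v v"
    using assms A_carrier unfolding eigenvalue_def eigenvector_def by auto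
  define w where "w = Q\<^sup>T *\<^sub>v v"
  have w: "w \<in> carrier_vec n" "w \<noteq> 0\<^sub>v n"
    unfolding w_def using Q_carrier v transpose_mult_vec_nonzero by auto
  have "Q\<^sup>T * A = (Q\<^sup>T * Q) * D * Q\<^sup>T"
    unfolding decomp using Q_carrier D_carrier by (simp add: assoc_mult_mat[of _ n n _ n _ n])
  then have QA: "Q\<^sup>T * A = D * Q\<^sup>T" using orthogonal D_carrier by simp
  have "D *\<^sub>v w = (Q\<^sup>T * A) *\<^sub>v v"
    unfolding QA w_def using Q_carrier D_carrier v by (simp add: assoc_mult_mat_vec[of _ n n _ n])
  also have "\<dots> = Q\<^sup>T *\<^sub>v (A *\<^sub>v v)"
    using Q_carrier A_carrier v by (simp add: assoc_mult_mat_vec[of _ n n _ n])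
  also have "\<dots> = l \<cdot>\<^sub>v w" unfolding v(3) w_def using Q_carrier v by (simp add: mult_mat_vec)
  finally have Dw: "D *\<^sub>v w = l \<cdot>\<^sub>v w" .
  obtain i where i: "i < n" "w $ i \<noteq> 0" using nonzero_vec_index[OF w] .
  have "D $$ (i, i) * w $ i = l * w $ i"
    using arg_cong[OF Dw, of "\<lambda>x. x $ i"] i w
      diagonal_mat_mult_vec_index[OF D_carrier diagonal w(1) i(1)]
    by simp
  then show ?thesis using that i by simp
qed

end

lemma sym_mat_min_eigenvalue:
  fixes A :: "real mat"
  assumes A: "A \<in> carrier_mat n n" and sym: "A\<^sup>T = A" and n: "n > 0"
  shows "eigenvalue A (min_eigenvalue A)" and "eigenvalue A l \<Longrightarrow> min_eigenvalue A \<le> l"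
proof -
  obtain Q D where "orthogonal_diag A Q D n" using sym_mat_orthogonal_diag[OF A sym] by blast
  then interpret orthogonal_diag A Q D n .
  have fin: "finite {l. eigenvalue A l}"
    by (rule finite_subset[of _ "(\<lambda>i. D $$ (i, i)) ` {..<n}"])
      (auto elim: eigenvalue_diag_entry)
  have "{l. eigenvalue A l} \<noteq> {}"
    using eigenvector_col[OF n] unfolding eigenvalue_def by blast
  then show "eigenvalue A (min_eigenvalue A)"
    unfolding min_eigenvalue_def using Min_in[OF fin] by simp
  show "eigenvalue A l \<Longrightarrow> min_eigenvalue A \<le> l"
    unfolding min_eigenvalue_def using Min_le[OF fin] by simp
qed

lemma sym_mat_pos_def_if_eigenvalues_pos:
  fixes A :: "real mat"
  assumes A: "A \<in> carrier_mat n n" and sym: "A\<^sup>T = A"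
    and pos: "\<And>l. eigenvalue A l \<Longrightarrow> l > 0"
  shows "pos_def_mat A"
proof -
  obtain Q D where "orthogonal_diag A Q D n" using sym_mat_orthogonal_diag[OF A sym] by blast
  then interpret orthogonal_diag A Q D n .
  have D_pos: "D $$ (i, i) > 0" if "i < n" for i
    using pos eigenvector_col[OF that] unfolding eigenvalue_def by blast
  have "v \<bullet> (A *\<^sub>v v) > 0" if v: "v \<in> carrier_vec n" "v \<noteq> 0\<^sub>v n" for v
  proof -
    obtain i where i: "i < n" "(Q\<^sup>T *\<^sub>v v) $ i \<noteq> 0"
      using nonzero_vec_index[OF _ transpose_mult_vec_nonzero[OF v]] Q_carrier v by auto
    have "0 \<le> D $$ (j, j) * ((Q\<^sup>T *\<^sub>v v) $ j)\<^sup>2" if "j < n" for j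
      using D_pos[OF that] by (intro mult_nonneg_nonneg) auto
    then have "0 < (\<Sum>j<n. D $$ (j, j) * ((Q\<^sup>T *\<^sub>v v) $ j)\<^sup>2)"
      using i D_pos by (intro sum_pos2[of _ i]) auto
    then show ?thesis unfolding quadratic_form[OF v(1)] .
  qed
  then show ?thesis unfolding pos_def_mat_def sym_mat_def using A sym by auto
qed

lemma sym_mat_zero_if_eigenvalues_zero:
  fixes A :: "real mat"
  assumes A: "A \<in> carrier_mat n n" and sym: "A\<^sup>T = A"
    and zero: "\<And>l. eigenvalue A l \<Longrightarrow> l = 0"
  shows "A = 0\<^sub>m n n"
proof -
  obtain Q D where "orthogonal_diag A Q D n" using sym_mat_orthogonal_diag[OF A sym] by blast
  then interpret orthogonal_diag A Q D n .
  have "D $$ (i, i) = 0" if "i < n" for i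
    using zero eigenvector_col[OF that] unfolding eigenvalue_def by blast
  then have "D = 0\<^sub>m n n"
    using D_carrier diagonal unfolding diagonal_mat_def by (intro eq_matI) auto
  then show ?thesis using decomp Q_carrier by simp
qed

section \<open>Positive definite matrices\<close>

lemma pos_def_matD:
  assumes "pos_def_mat A" and "A \<in> carrier_mat n n"
  shows "A\<^sup>T = A" and "\<And>v. v \<in> carrier_vec n \<Longrightarrow> v \<noteq> 0\<^sub>v n \<Longrightarrow> v \<bullet> (A *\<^sub>v v) > 0"
  using assms unfolding pos_def_mat_def sym_mat_def by auto

lemma pos_def_mat_form_nonneg:
  assumes "pos_def_mat A" and "A \<in> carrier_mat n n" and "v \<in> carrier_vec n"
  shows "0 \<le> v \<bullet> (A *\<^sub>v v)"
  using pos_def_matD(2)[OF assms(1,2)] assms by (cases "v = 0\<^sub>v n") (auto intro: less_imp_le)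

lemma pos_def_mat_eigenvalue_pos:
  assumes pd: "pos_def_mat A" and A: "A \<in> carrier_mat n n" and l: "eigenvalue A l"
  shows "l > 0"
proof -
  obtain v where v: "v \<in> carrier_vec n" "v \<noteq> 0\<^sub>v n" "A *\<^sub>v v = l \<cdot>\<^sub>v v"
    using l A unfolding eigenvalue_def eigenvector_def by auto
  have "0 < v \<bullet> (A *\<^sub>v v)" using pos_def_matD(2)[OF pd A v(1,2)] .
  also have "\<dots> = l * (v \<bullet> v)" using v by simp
  finally show ?thesis using real_scalar_prod_self_pos[OF v(1,2)] by (simp add: zero_less_mult_iff)
qed

lemma pos_def_mat_mult_vec_nonzero:
  assumes "pos_def_mat A" and "A \<in> carrier_mat n n" and "v \<in> carrier_vec n" and "v \<noteq> 0\<^sub>v n"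
  shows "A *\<^sub>v v \<noteq> 0\<^sub>v n"
  using pos_def_matD(2)[OF assms] assms(3) by auto

lemma inv_of_eqI:
  fixes A B :: "real mat"
  assumes A: "A \<in> carrier_mat n n" and B: "B \<in> carrier_mat n n"
    and AB: "A * B = 1\<^sub>m n" and BA: "B * A = 1\<^sub>m n"
  shows "inv_of A = B"
  unfolding inv_of_def carrier_matD(1)[OF A]
proof (rule the_equality)
  fix M assume M: "M \<in> carrier_mat n n \<and> A * M = 1\<^sub>m n \<and> M * A = 1\<^sub>m n"
  then have "M = M * (A * B)" using AB by auto
  also have "\<dots> = (M * A) * B" by (rule assoc_mult_mat[symmetric]) (use M A B in auto)
  finally show "M = B" using M B by simp
qed (use B AB BA in blast)

lemma pos_def_mat_inv_of:
  fixes A :: "real mat"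
  assumes pd: "pos_def_mat A" and A: "A \<in> carrier_mat n n"
  shows "inv_of A \<in> carrier_mat n n" and "A * inv_of A = 1\<^sub>m n"
proof -
  have "det A \<noteq> 0"
    using det_0_iff_vec_prod_zero[OF A] pos_def_mat_mult_vec_nonzero[OF pd A] by blast
  then have "A \<in> Units (ring_mat TYPE(real) n ())" by (rule det_non_zero_imp_unit[OF A])
  then obtain B where B: "B \<in> carrier_mat n n" "A * B = 1\<^sub>m n" "B * A = 1\<^sub>m n"
    unfolding Units_def by (auto simp: ring_mat_simps)
  with inv_of_eqI[OF A B] show "inv_of A \<in> carrier_mat n n" "A * inv_of A = 1\<^sub>m n" by auto
qed

lemma mult_inv_of_mult_vec:
  fixes A :: "real mat"
  assumes "pos_def_mat A" and "A \<in> carrier_mat n n" and "v \<in> carrier_vec n"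
  shows "A *\<^sub>v (inv_of A *\<^sub>v v) = v"
  using pos_def_mat_inv_of[OF assms(1,2)] assms(2,3)
  by (simp flip: assoc_mult_mat_vec[of _ n n _ n])

lemma pos_def_mat_sqrt_exists:
  fixes A :: "real mat"
  assumes pd: "pos_def_mat A" and A: "A \<in> carrier_mat n n"
  obtains S where "S \<in> carrier_mat n n" "pos_def_mat S" "S * S = A"
proof -
  obtain Q D where "orthogonal_diag A Q D n"
    using sym_mat_orthogonal_diag[OF A pos_def_matD(1)[OF pd A]] by blast
  then interpret orthogonal_diag A Q D n .
  have D_pos: "D $$ (i, i) > 0" if "i < n" for i
    using pos_def_mat_eigenvalue_pos[OF pd A] eigenvector_col[OF that] unfolding eigenvalue_def
    by blast
  define R where "R = mat n n (\<lambda>(i, j). if i = j then sqrt (D $$ (i, i)) else 0)"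
  have R: "R \<in> carrier_mat n n" "diagonal_mat R" "R\<^sup>T = R"
    unfolding R_def diagonal_mat_def by (auto intro!: eq_matI)
  have RR: "R * R = D"
  proof (rule eq_matI)
    fix i j assume ij: "i < dim_row D" "j < dim_col D"
    then have "(R * R) $$ (i, j) = R $$ (i, i) * R $$ (i, j)"
      using diagonal_mat_mult_vec_index[OF R(1,2), of "col R j" i] R(1) D_carrier by auto
    then show "(R * R) $$ (i, j) = D $$ (i, j)"
      using ij D_carrier diagonal D_pos[of i] unfolding diagonal_mat_def by (auto simp: R_def)
  qed (use R D_carrier in auto)
  define S where "S = Q * R * Q\<^sup>T"
  interpret S: orthogonal_diag S Q R n
    using Q_carrier R orthogonal S_def by unfold_locales auto
  have S: "S \<in> carrier_mat n n" using S.A_carrier .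
  have "S\<^sup>T = S" unfolding S_def using transpose_conj_mat[OF Q_carrier R(1)] R(3) by simp
  moreover have "l > 0" if "eigenvalue S l" for l
    using that D_pos by (elim S.eigenvalue_diag_entry) (simp add: R_def)
  ultimately have "pos_def_mat S" by (rule sym_mat_pos_def_if_eigenvalues_pos[OF S])
  moreover have "S * S = A"
  proof -
    have "S * S = Q * (R * (Q\<^sup>T * Q) * R) * Q\<^sup>T"
      unfolding S_def using Q_carrier R(1) by (simp add: assoc_mult_mat[of _ n n _ n _ n])
    then show ?thesis unfolding orthogonal decomp using R(1) RR by simp
  qed
  ultimately show ?thesis using that S by blast
qed

text \<open>For an eigenvector v of M = S - T with eigenvalue \<mu>,
  \<mu> (v S v + v T v) = (S v + T v) (S v - T v) = v S^2 v - v T^2 v = 0,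
  so every eigenvalue of the symmetric matrix M vanishes.\<close>
lemma pos_def_mat_sqrt_unique:
  fixes S T :: "real mat"
  assumes S: "S \<in> carrier_mat n n" "pos_def_mat S" and T: "T \<in> carrier_mat n n" "pos_def_mat T"
    and eq: "S * S = T * T"
  shows "S = T"
proof -
  note S_sym = pos_def_matD(1)[OF S(2,1)] and T_sym = pos_def_matD(1)[OF T(2,1)]
  define M where "M = S - T"
  have M: "M \<in> carrier_mat n n" unfolding M_def using minus_carrier_mat[OF T(1)] .
  have M_sym: "M\<^sup>T = M"
    unfolding M_def using S T S_sym T_sym by (metis transpose_minus)
  have "\<mu> = 0" if \<mu>: "eigenvalue M \<mu>" for \<mu>
  proof -
    obtain v where v: "v \<in> carrier_vec n" "v \<noteq> 0\<^sub>v n" "M *\<^sub>v v = \<mu> \<cdot>\<^sub>v v"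
      using \<mu> M unfolding eigenvalue_def eigenvector_def by auto
    define a where "a = S *\<^sub>v v"
    define b where "b = T *\<^sub>v v"
    have a: "a \<in> carrier_vec n" and b: "b \<in> carrier_vec n" unfolding a_def b_def using S T v by auto
    have Mv: "M *\<^sub>v v = a - b"
      unfolding M_def a_def b_def using S T v(1) by (simp add: minus_mult_distrib_mat_vec)
    have Sx: "v \<bullet> (S *\<^sub>v x) = a \<bullet> x" and Tx: "v \<bullet> (T *\<^sub>v x) = b \<bullet> x" if "x \<in> carrier_vec n" for x
      using transpose_vec_mult_scalar[OF S(1) that v(1)]
        transpose_vec_mult_scalar[OF T(1) that v(1)]
        S_sym T_sym unfolding a_def b_def by auto
    have "a \<bullet> a = v \<bullet> ((S * S) *\<^sub>v v)" and "b \<bullet> b = v \<bullet> ((T * T) *\<^sub>v v)"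
      using Sx[OF a] Tx[OF b] S T v(1) unfolding a_def b_def
      by (simp_all add: assoc_mult_mat_vec[of _ n n _ n])
    then have "a \<bullet> a = b \<bullet> b" using eq by simp
    have "\<mu> * (v \<bullet> (S *\<^sub>v v) + v \<bullet> (T *\<^sub>v v)) = v \<bullet> (S *\<^sub>v (M *\<^sub>v v)) + v \<bullet> (T *\<^sub>v (M *\<^sub>v v))"
      unfolding v(3) using S T v(1) by (simp add: mult_mat_vec algebra_simps)
    also have "\<dots> = a \<bullet> (a - b) + b \<bullet> (a - b)" unfolding Mv using Sx Tx a b by simp
    also have "\<dots> = a \<bullet> a - b \<bullet> b"
      using a b comm_scalar_prod[OF a b] by (simp add: scalar_prod_minus_distrib)
    finally show "\<mu> = 0"
      using \<open>a \<bullet> a = b \<bullet> b\<close> pos_def_matD(2)[OF S(2,1) v(1,2)] pos_def_matD(2)[OF T(2,1) v(1,2)]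
      by simp
  qed
  then have "M = 0\<^sub>m n n" by (rule sym_mat_zero_if_eigenvalues_zero[OF M M_sym])
  show "S = T"
  proof (rule eq_matI)
    fix i j assume "i < dim_row T" "j < dim_col T"
    then show "S $$ (i, j) = T $$ (i, j)"
      using arg_cong[OF \<open>M = 0\<^sub>m n n\<close>, of "\<lambda>X. X $$ (i, j)"] S T unfolding M_def by simp
  qed (use S T in auto)
qed

lemma sqrt_pd:
  fixes A :: "real mat"
  assumes pd: "pos_def_mat A" and A: "A \<in> carrier_mat n n"
  shows "sqrt_pd A \<in> carrier_mat n n" and "pos_def_mat (sqrt_pd A)"
    and "sqrt_pd A * sqrt_pd A = A"
proof -
  obtain S where S: "S \<in> carrier_mat n n" "pos_def_mat S" "S * S = A"
    using pos_def_mat_sqrt_exists[OF pd A] .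
  have "sqrt_pd A = S"
    unfolding sqrt_pd_def carrier_matD(1)[OF A]
  proof (rule the_equality)
    fix S' assume "S' \<in> carrier_mat n n \<and> pos_def_mat S' \<and> S' * S' = A"
    then show "S' = S" using pos_def_mat_sqrt_unique[of S' n S] S by auto
  qed (use S in blast)
  then show "sqrt_pd A \<in> carrier_mat n n" "pos_def_mat (sqrt_pd A)" "sqrt_pd A * sqrt_pd A = A"
    using S by auto
qed

lemma sqrt_pd_col_scalar_prod:
  fixes A :: "real mat"
  assumes pd: "pos_def_mat A" and A: "A \<in> carrier_mat n n" and i: "i < n" and j: "j < n"
  shows "col (sqrt_pd A) i \<bullet> col (sqrt_pd A) j = A $$ (i, j)"
proof -
  note R = sqrt_pd[OF pd A]
  have "col (sqrt_pd A) i = col (sqrt_pd A)\<^sup>T i" using pos_def_matD(1)[OF R(2,1)] by simp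
  also have "\<dots> = row (sqrt_pd A) i" using R(1) i by simp
  finally show ?thesis using R(1,3) i j by (metis carrier_matD index_mult_mat(1))
qed

text \<open>Both Cauchy-Schwarz inequalities minimise the quadratic form along the line
  x + t y, at t = - x A y / y A y.\<close>
lemma pos_def_mat_cauchy_schwarz:
  fixes A :: "real mat"
  assumes pd: "pos_def_mat A" and A: "A \<in> carrier_mat n n"
    and x: "x \<in> carrier_vec n" and y: "y \<in> carrier_vec n"
  shows "(x \<bullet> (A *\<^sub>v y))\<^sup>2 \<le> (x \<bullet> (A *\<^sub>v x)) * (y \<bullet> (A *\<^sub>v y))"
proof (cases "y = 0\<^sub>v n")
  case True
  then show ?thesis using A x by simp
next
  case False
  note sym = pos_def_matD(1)[OF pd A]
  have Ay: "y \<bullet> (A *\<^sub>v y) > 0" using pos_def_matD(2)[OF pd A y False] .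
  define t where "t = - (x \<bullet> (A *\<^sub>v y)) / (y \<bullet> (A *\<^sub>v y))"
  have "0 \<le> (x + t \<cdot>\<^sub>v y) \<bullet> (A *\<^sub>v (x + t \<cdot>\<^sub>v y))"
    using pos_def_matD(2)[OF pd A, of "x + t \<cdot>\<^sub>v y"] x y A
    by (cases "x + t \<cdot>\<^sub>v y = 0\<^sub>v n") (auto intro: less_imp_le)
  also have "\<dots> = x \<bullet> (A *\<^sub>v x) - (x \<bullet> (A *\<^sub>v y))\<^sup>2 / (y \<bullet> (A *\<^sub>v y))"
    unfolding sym_quadratic_form_add_smult[OF A sym x y] t_def using Ay
    by (simp add: power2_eq_square field_simps)
  finally show ?thesis using Ay by (simp add: field_simps)
qed

lemma pos_def_mat_cauchy_schwarz_strict: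
  fixes A :: "real mat"
  assumes pd: "pos_def_mat A" and A: "A \<in> carrier_mat n n"
    and x: "x \<in> carrier_vec n" and y: "y \<in> carrier_vec n" and y0: "y \<noteq> 0\<^sub>v n"
    and indep: "\<And>t. x + t \<cdot>\<^sub>v y \<noteq> 0\<^sub>v n"
  shows "(x \<bullet> (A *\<^sub>v y))\<^sup>2 < (x \<bullet> (A *\<^sub>v x)) * (y \<bullet> (A *\<^sub>v y))"
proof -
  note sym = pos_def_matD(1)[OF pd A]
  have Ay: "y \<bullet> (A *\<^sub>v y) > 0" using pos_def_matD(2)[OF pd A y y0] .
  define t where "t = - (x \<bullet> (A *\<^sub>v y)) / (y \<bullet> (A *\<^sub>v y))"
  have "0 < (x + t \<cdot>\<^sub>v y) \<bullet> (A *\<^sub>v (x + t \<cdot>\<^sub>v y))"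
    using pos_def_matD(2)[OF pd A _ indep] x y by simp
  also have "\<dots> = x \<bullet> (A *\<^sub>v x) - (x \<bullet> (A *\<^sub>v y))\<^sup>2 / (y \<bullet> (A *\<^sub>v y))"
    unfolding sym_quadratic_form_add_smult[OF A sym x y] t_def using Ay
    by (simp add: power2_eq_square field_simps)
  finally show ?thesis using Ay by (simp add: field_simps)
qed

lemma pos_def_mat_dual_cauchy_schwarz:
  fixes A :: "real mat"
  assumes pd: "pos_def_mat A" and A: "A \<in> carrier_mat n n"
    and w: "w \<in> carrier_vec n" and y: "y \<in> carrier_vec n"
  shows "(w \<bullet> y)\<^sup>2 \<le> (w \<bullet> (inv_of A *\<^sub>v w)) * (y \<bullet> (A *\<^sub>v y))"
proof -
  define z where "z = inv_of A *\<^sub>v w"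
  have z: "z \<in> carrier_vec n" unfolding z_def using pos_def_mat_inv_of[OF pd A] w by simp
  have Az: "A *\<^sub>v z = w" unfolding z_def using mult_inv_of_mult_vec[OF pd A w] .
  have "w \<bullet> y = z \<bullet> (A *\<^sub>v y)"
    using sym_bilinear_comm[OF A pos_def_matD(1)[OF pd A] z y] Az comm_scalar_prod[OF w y] by simp
  moreover have "z \<bullet> (A *\<^sub>v z) = w \<bullet> z" using Az comm_scalar_prod[OF z w] by simp
  ultimately show ?thesis using pos_def_mat_cauchy_schwarz[OF pd A z y] unfolding z_def by simp
qed

section \<open>Feasibility of a second-order cone constraint\<close>

lemma eventually_quadratic_nonneg:
  fixes a b c :: real
  assumes "0 < c \<or> (c = 0 \<and> 0 < b)"
  shows "eventually (\<lambda>t. 0 \<le> a + b * t + c * t\<^sup>2) at_top"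
  using assms
proof
  assume "0 < c"
  then show ?thesis by real_asymp
next
  assume "c = 0 \<and> 0 < b"
  then show ?thesis by real_asymp
qed

locale socp =
  fixes m :: nat and S :: "real mat" and a \<beta> :: real and b :: "real vec"
  assumes m_pos: "0 < m"
    and S_carrier: "S \<in> carrier_mat (Suc m) (Suc m)" and S_pd: "pos_def_mat S"
    and b_carrier: "b \<in> carrier_vec m" and beta_pos: "0 < \<beta>"
begin

text \<open>For S = Sigma_B, the blocks s12 and S22 are the paper's
  (Sigma_LgB^(1/2))' Sigma_LfB^(1/2) and Sigma_LgB, F is its matrix F(x|D_N), and p is the
  bracket in its second case.\<close>

definition s11 :: real where "s11 = S $$ (0, 0)"
definition s12 :: "real vec" where "s12 = vec m (\<lambda>j. S $$ (Suc j, 0))"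
definition S22 :: "real mat" where "S22 = mat m m (\<lambda>(i, j). S $$ (Suc i, Suc j))"
definition F :: "real mat" where "F = \<beta>\<^sup>2 \<cdot>\<^sub>m S22 - mat m m (\<lambda>(i, j). b $ i * b $ j)"
definition p :: "real vec" where "p = \<beta>\<^sup>2 \<cdot>\<^sub>v s12 - a \<cdot>\<^sub>v b"
definition w :: "real vec" where "w = vCons a b"

definition feasible :: "real vec \<Rightarrow> bool" where
  "feasible u \<longleftrightarrow> \<beta> * sqrt (vCons 1 u \<bullet> (S *\<^sub>v vCons 1 u)) \<le> a + b \<bullet> u"

definition cone_form :: "real vec \<Rightarrow> real" where
  "cone_form y = (w \<bullet> y)\<^sup>2 - \<beta>\<^sup>2 * (y \<bullet> (S *\<^sub>v y))"

lemma S_sym: "S\<^sup>T = S"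
  using pos_def_matD(1)[OF S_pd S_carrier] .

lemma S_index_sym: "i < Suc m \<Longrightarrow> j < Suc m \<Longrightarrow> S $$ (i, j) = S $$ (j, i)"
  using S_sym S_carrier by (metis carrier_matD index_transpose_mat(1))

lemma s12_carrier: "s12 \<in> carrier_vec m"
  unfolding s12_def by simp

lemma S22_carrier: "S22 \<in> carrier_mat m m"
  unfolding S22_def by simp

lemma F_carrier: "F \<in> carrier_mat m m"
  unfolding F_def by (rule minus_carrier_mat) (simp add: S22_def)

lemma p_carrier: "p \<in> carrier_vec m"
  unfolding p_def using s12_carrier b_carrier by simp

lemma w_carrier: "w \<in> carrier_vec (Suc m)"
  unfolding w_def using b_carrier by simp

lemma S22_sym: "S22\<^sup>T = S22"
  unfolding S22_def by (rule eq_matI) (auto simp: S_index_sym)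

lemma F_sym: "F\<^sup>T = F"
  using F_carrier unfolding F_def S22_def by (intro eq_matI) (auto simp: S_index_sym)

lemma S_mult_vCons:
  assumes u: "u \<in> carrier_vec m"
  shows "S *\<^sub>v vCons c u = vCons (c * s11 + s12 \<bullet> u) (c \<cdot>\<^sub>v s12 + S22 *\<^sub>v u)"
proof (rule eq_vecI)
  fix i assume "i < dim_vec (vCons (c * s11 + s12 \<bullet> u) (c \<cdot>\<^sub>v s12 + S22 *\<^sub>v u))"
  then have i: "i < Suc m" using s12_carrier S22_carrier by simp
  have "row S i = vCons (S $$ (i, 0)) (vec m (\<lambda>k. S $$ (i, Suc k)))"
    using S_carrier i by (intro eq_vecI) (auto simp: vec_index_vCons)
  then have Si: "(S *\<^sub>v vCons c u) $ i = S $$ (i, 0) * c + vec m (\<lambda>k. S $$ (i, Suc k)) \<bullet> u"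
    using S_carrier i by simp
  show "(S *\<^sub>v vCons c u) $ i = vCons (c * s11 + s12 \<bullet> u) (c \<cdot>\<^sub>v s12 + S22 *\<^sub>v u) $ i"
  proof (cases i)
    case 0
    have "vec m (\<lambda>k. S $$ (0, Suc k)) = s12"
      unfolding s12_def by (rule eq_vecI) (auto simp: S_index_sym)
    then show ?thesis using Si 0 by (simp add: s11_def)
  next
    case (Suc i')
    then have "vec m (\<lambda>k. S $$ (i, Suc k)) = row S22 i'"
      using i by (intro eq_vecI) (auto simp: S22_def)
    then show ?thesis using Si Suc i u s12_carrier S22_carrier by (simp add: s12_def)
  qed
qed (use S_carrier s12_carrier S22_carrier in simp)

lemma quadratic_form_vCons:
  assumes u: "u \<in> carrier_vec m"
  shows "vCons c u \<bullet> (S *\<^sub>v vCons c u) = c\<^sup>2 * s11 + 2 * c * (s12 \<bullet> u) + u \<bullet> (S22 *\<^sub>v u)"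
  using u s12_carrier S22_carrier comm_scalar_prod[OF u s12_carrier]
  by (simp add: S_mult_vCons scalar_prod_add_distrib[of _ m] power2_eq_square algebra_simps)

lemma S22_pd: "pos_def_mat S22"
proof -
  have "u \<bullet> (S22 *\<^sub>v u) > 0" if u: "u \<in> carrier_vec m" "u \<noteq> 0\<^sub>v m" for u
    using pos_def_matD(2)[OF S_pd S_carrier, of "vCons 0 u"] quadratic_form_vCons[OF u(1), of 0] u
    by (simp add: zero_vec_Suc)
  then show ?thesis
    unfolding pos_def_mat_def sym_mat_def using S22_carrier S22_sym by auto
qed

lemma quadratic_form_pos: "u \<in> carrier_vec m \<Longrightarrow> vCons 1 u \<bullet> (S *\<^sub>v vCons 1 u) > 0"
  using pos_def_matD(2)[OF S_pd S_carrier, of "vCons 1 u"] by (simp add: zero_vec_Suc)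

lemma F_mult_vec:
  assumes x: "x \<in> carrier_vec m"
  shows "F *\<^sub>v x = \<beta>\<^sup>2 \<cdot>\<^sub>v (S22 *\<^sub>v x) - (b \<bullet> x) \<cdot>\<^sub>v b"
proof (rule eq_vecI)
  fix i assume "i < dim_vec (\<beta>\<^sup>2 \<cdot>\<^sub>v (S22 *\<^sub>v x) - (b \<bullet> x) \<cdot>\<^sub>v b)"
  then have i: "i < m" using b_carrier by simp
  have "(F *\<^sub>v x) $ i = (\<Sum>j = 0..<m. (\<beta>\<^sup>2 * S22 $$ (i, j) - b $ i * b $ j) * x $ j)"
    using i x F_carrier unfolding F_def S22_def by (simp add: mult_mat_vec_def scalar_prod_def)
  also have "\<dots> = \<beta>\<^sup>2 * (\<Sum>j = 0..<m. S22 $$ (i, j) * x $ j) - b $ i * (\<Sum>j = 0..<m. b $ j * x $ j)"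
    by (simp add: algebra_simps sum_subtractf sum_distrib_left)
  also have "\<dots> = (\<beta>\<^sup>2 \<cdot>\<^sub>v (S22 *\<^sub>v x) - (b \<bullet> x) \<cdot>\<^sub>v b) $ i"
    using i x b_carrier S22_carrier by (simp add: mult_mat_vec_def scalar_prod_def)
  finally show "(F *\<^sub>v x) $ i = (\<beta>\<^sup>2 \<cdot>\<^sub>v (S22 *\<^sub>v x) - (b \<bullet> x) \<cdot>\<^sub>v b) $ i" .
qed (use F_carrier b_carrier in simp)

lemma F_bilinear:
  assumes d: "d \<in> carrier_vec m" and u: "u \<in> carrier_vec m"
  shows "d \<bullet> (F *\<^sub>v u) = \<beta>\<^sup>2 * (d \<bullet> (S22 *\<^sub>v u)) - (b \<bullet> d) * (b \<bullet> u)"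
  unfolding F_mult_vec[OF u] using d b_carrier S22_carrier u comm_scalar_prod[OF d b_carrier]
  by (simp add: scalar_prod_minus_distrib[of _ m])

lemma p_scalar_prod:
  "u \<in> carrier_vec m \<Longrightarrow> p \<bullet> u = \<beta>\<^sup>2 * (s12 \<bullet> u) - a * (b \<bullet> u)"
  unfolding p_def using s12_carrier b_carrier by (simp add: minus_scalar_prod_distrib[of _ m])

lemma cone_form_vCons:
  assumes u: "u \<in> carrier_vec m"
  shows "cone_form (vCons c u) = c\<^sup>2 * (a\<^sup>2 - \<beta>\<^sup>2 * s11) - 2 * c * (p \<bullet> u) - u \<bullet> (F *\<^sub>v u)"
  unfolding cone_form_def quadratic_form_vCons[OF u] F_bilinear[OF u u] w_def
  using u b_carrier s12_carrier comm_scalar_prod[OF u b_carrier] comm_scalar_prod[OF s12_carrier u]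
  by (simp add: p_scalar_prod power2_eq_square algebra_simps)

lemma cone_form_smult:
  assumes y: "y \<in> carrier_vec (Suc m)"
  shows "cone_form (t \<cdot>\<^sub>v y) = t\<^sup>2 * cone_form y"
  unfolding cone_form_def using quadratic_form_smult[OF S_carrier y] w_carrier y
  by (simp add: power2_eq_square algebra_simps)

lemma cone_form_vCons_one:
  "cone_form (vCons 1 u) = (a + b \<bullet> u)\<^sup>2 - \<beta>\<^sup>2 * (vCons 1 u \<bullet> (S *\<^sub>v vCons 1 u))"
  unfolding cone_form_def w_def by simp

lemma feasible_iff:
  assumes u: "u \<in> carrier_vec m"
  shows "feasible u \<longleftrightarrow> 0 \<le> a + b \<bullet> u \<and> 0 \<le> cone_form (vCons 1 u)"
proof -
  define Q where "Q = vCons 1 u \<bullet> (S *\<^sub>v vCons 1 u)"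
  define r where "r = \<beta> * sqrt Q"
  have "Q > 0" unfolding Q_def using quadratic_form_pos[OF u] .
  then have r: "r > 0" and cone: "cone_form (vCons 1 u) = (a + b \<bullet> u)\<^sup>2 - r\<^sup>2"
    unfolding cone_form_vCons_one Q_def[symmetric] r_def using beta_pos
    by (simp_all add: power_mult_distrib)
  have "r \<le> a + b \<bullet> u \<longleftrightarrow> 0 \<le> a + b \<bullet> u \<and> r\<^sup>2 \<le> (a + b \<bullet> u)\<^sup>2"
    using r power_mono[of r "a + b \<bullet> u" 2] power2_le_imp_le[of r "a + b \<bullet> u"] by auto
  then show ?thesis unfolding feasible_def Q_def[symmetric] r_def[symmetric] cone by simp
qed

lemma feasible_imp_pos:
  assumes "u \<in> carrier_vec m" and "feasible u"
  shows "0 < a + b \<bullet> u"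
proof -
  have "0 < \<beta> * sqrt (vCons 1 u \<bullet> (S *\<^sub>v vCons 1 u))"
    using beta_pos quadratic_form_pos[OF assms(1)] by simp
  then show ?thesis using assms(2) unfolding feasible_def by linarith
qed

lemma inv_form_ge_if_feasible:
  assumes u: "u \<in> carrier_vec m" and feas: "feasible u"
  shows "\<beta>\<^sup>2 \<le> w \<bullet> (inv_of S *\<^sub>v w)"
proof -
  define Q where "Q = vCons 1 u \<bullet> (S *\<^sub>v vCons 1 u)"
  have "\<beta>\<^sup>2 * Q \<le> (w \<bullet> vCons 1 u)\<^sup>2"
    using feas feasible_iff[OF u] unfolding cone_form_def Q_def by simp
  also have "\<dots> \<le> (w \<bullet> (inv_of S *\<^sub>v w)) * Q"
    unfolding Q_def using pos_def_mat_dual_cauchy_schwarz[OF S_pd S_carrier w_carrier] u by simp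
  finally show ?thesis using quadratic_form_pos[OF u] unfolding Q_def[symmetric] by simp
qed

lemma F_pd_if_min_eigenvalue_pos: "0 < min_eigenvalue F \<Longrightarrow> pos_def_mat F"
  using sym_mat_pos_def_if_eigenvalues_pos[OF F_carrier F_sym]
    sym_mat_min_eigenvalue(2)[OF F_carrier F_sym m_pos] by force

definition u_opt :: "real vec" where "u_opt = - (inv_of F *\<^sub>v p)"

context
  assumes F_pd: "pos_def_mat F"
begin

lemma u_opt_carrier: "u_opt \<in> carrier_vec m"
  unfolding u_opt_def using pos_def_mat_inv_of[OF F_pd F_carrier] p_carrier by simp

lemma F_mult_u_opt: "F *\<^sub>v u_opt = - p"
  unfolding u_opt_def using pos_def_mat_inv_of[OF F_pd F_carrier] F_carrier p_carrier
    mult_inv_of_mult_vec[OF F_pd F_carrier p_carrier]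
  by (simp add: mult_mat_vec_uminus)

lemma cone_form_u_opt_add:
  assumes d: "d \<in> carrier_vec m"
  shows "cone_form (vCons 1 (u_opt + d)) = cone_form (vCons 1 u_opt) - d \<bullet> (F *\<^sub>v d)"
proof -
  note u = u_opt_carrier
  have "u_opt \<bullet> (F *\<^sub>v d) = - (p \<bullet> d)"
    using sym_bilinear_comm[OF F_carrier F_sym u d] F_mult_u_opt comm_scalar_prod[OF d p_carrier]
      d p_carrier by simp
  then show ?thesis
    unfolding cone_form_vCons[OF u] cone_form_vCons[OF add_carrier_vec[OF u d]]
      sym_quadratic_form_add[OF F_carrier F_sym u d]
    using scalar_prod_add_distrib[OF p_carrier u d] by simp
qed

lemma cone_form_le_u_opt:
  assumes u: "u \<in> carrier_vec m"
  shows "cone_form (vCons 1 u) \<le> cone_form (vCons 1 u_opt)"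
proof -
  have d: "u - u_opt \<in> carrier_vec m" using u u_opt_carrier by simp
  have "u_opt + (u - u_opt) = u" using u u_opt_carrier by auto
  then show ?thesis
    using cone_form_u_opt_add[OF d] pos_def_mat_form_nonneg[OF F_pd F_carrier d] by simp
qed

text \<open>If a + b u_opt < 0 < a + b u, the segment from u_opt to u meets the hyperplane
  a + b v = 0, where cone_form (vCons 1 v) < 0. But cone_form (vCons 1 v) is a concave
  quadratic in v with maximum at u_opt, so on the segment it stays above its value at the
  feasible point u, which is nonnegative.\<close>
lemma u_opt_nonneg_if_feasible:
  assumes u: "u \<in> carrier_vec m" and feas: "feasible u"
  shows "0 \<le> a + b \<bullet> u_opt"
proof (rule ccontr)
  assume neg: "\<not> 0 \<le> a + b \<bullet> u_opt"
  define d where "d = u - u_opt"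
  have d: "d \<in> carrier_vec m" unfolding d_def using u u_opt_carrier by simp
  have u_eq: "u = u_opt + d" unfolding d_def using u u_opt_carrier by auto
  have pos: "0 < a + b \<bullet> u" using feasible_imp_pos[OF u feas] .
  have bd: "b \<bullet> u = b \<bullet> u_opt + b \<bullet> d"
    unfolding u_eq using scalar_prod_add_distrib[OF b_carrier u_opt_carrier d] .
  define t where "t = - (a + b \<bullet> u_opt) / (b \<bullet> d)"
  have bd_pos: "0 < b \<bullet> d" using neg pos bd by simp
  have t: "0 \<le> t" "t \<le> 1" unfolding t_def using neg pos bd bd_pos by (auto simp: field_simps)
  define v where "v = u_opt + t \<cdot>\<^sub>v d"
  have v: "v \<in> carrier_vec m" unfolding v_def using u_opt_carrier d by simp
  have "b \<bullet> v = b \<bullet> u_opt + t * (b \<bullet> d)"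
    unfolding v_def
    using scalar_prod_add_distrib[OF b_carrier u_opt_carrier, of "t \<cdot>\<^sub>v d"] d b_carrier
    by simp
  then have "a + b \<bullet> v = 0" unfolding t_def using bd_pos by (simp add: field_simps)
  then have "cone_form (vCons 1 v) < 0"
    unfolding cone_form_vCons_one using quadratic_form_pos[OF v] beta_pos by simp
  moreover have "cone_form (vCons 1 u) \<le> cone_form (vCons 1 v)"
  proof -
    have "t\<^sup>2 * (d \<bullet> (F *\<^sub>v d)) \<le> d \<bullet> (F *\<^sub>v d)"
      using t pos_def_mat_form_nonneg[OF F_pd F_carrier d]
      by (simp add: mult_left_le_one_le power_le_one)
    then show ?thesis
      unfolding v_def u_eq cone_form_u_opt_add[OF d]
        cone_form_u_opt_add[OF smult_carrier_vec[THEN iffD2, OF d]]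
        quadratic_form_smult[OF F_carrier d] by simp
  qed
  ultimately show False using feas feasible_iff[OF u] by simp
qed

text \<open>By inv_form, cone_form is nonnegative at z = inv S w. Writing z = vCons c v,
  c = 0 is impossible because cone_form (vCons 0 v) = - v F v < 0, and homogeneity then
  gives cone_form (vCons 1 (v / c)) \<ge> 0.\<close>
lemma feasible_u_opt:
  assumes inv_form: "\<beta>\<^sup>2 \<le> w \<bullet> (inv_of S *\<^sub>v w)" and nonneg: "0 \<le> a + b \<bullet> u_opt"
  shows "feasible u_opt"
proof -
  define z where "z = inv_of S *\<^sub>v w"
  have z: "z \<in> carrier_vec (Suc m)"
    unfolding z_def using pos_def_mat_inv_of[OF S_pd S_carrier] w_carrier by simp
  have "z \<bullet> (S *\<^sub>v z) = w \<bullet> z"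
    unfolding z_def mult_inv_of_mult_vec[OF S_pd S_carrier w_carrier]
    using comm_scalar_prod[OF z[unfolded z_def] w_carrier] .
  moreover have wz: "\<beta>\<^sup>2 \<le> w \<bullet> z" using inv_form unfolding z_def .
  moreover have "0 \<le> w \<bullet> z" using wz by (meson order.trans zero_le_power2)
  ultimately have Hz: "0 \<le> cone_form z"
    unfolding cone_form_def using mult_right_mono[OF wz] by (simp add: power2_eq_square)
  obtain c v where zv: "z = vCons c v" and v: "v \<in> carrier_vec m" using z by (cases z) auto
  have "c \<noteq> 0"
  proof
    assume "c = 0"
    then have "0 \<le> - (v \<bullet> (F *\<^sub>v v))" using Hz cone_form_vCons[OF v, of 0] zv by simp
    then have "v = 0\<^sub>v m" using pos_def_matD(2)[OF F_pd F_carrier v] by force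
    then have "w \<bullet> z = 0" using zv \<open>c = 0\<close> w_carrier by (simp add: w_def zero_vec_Suc)
    then show False using wz beta_pos by simp
  qed
  have "z = c \<cdot>\<^sub>v vCons 1 ((1 / c) \<cdot>\<^sub>v v)" using zv \<open>c \<noteq> 0\<close> v
    by (auto intro!: eq_vecI simp: vec_index_vCons)
  then have "0 \<le> cone_form (vCons 1 ((1 / c) \<cdot>\<^sub>v v))"
    using Hz cone_form_smult[of "vCons 1 ((1 / c) \<cdot>\<^sub>v v)" c] v \<open>c \<noteq> 0\<close>
    by (simp add: zero_le_mult_iff)
  then have "0 \<le> cone_form (vCons 1 u_opt)" using cone_form_le_u_opt[of "(1 / c) \<cdot>\<^sub>v v"] v by simp
  then show ?thesis using feasible_iff[OF u_opt_carrier] nonneg by simp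
qed

end

lemma feasible_on_ray:
  assumes d: "d \<in> carrier_vec m" and bd: "0 < b \<bullet> d"
    and growth: "d \<bullet> (F *\<^sub>v d) < 0 \<or> (d \<bullet> (F *\<^sub>v d) = 0 \<and> p \<bullet> d < 0)"
  shows "\<exists>u \<in> carrier_vec m. feasible u"
proof -
  have cone_form_ray: "cone_form (vCons 1 (t \<cdot>\<^sub>v d))
      = (a\<^sup>2 - \<beta>\<^sup>2 * s11) + (- 2 * (p \<bullet> d)) * t + (- (d \<bullet> (F *\<^sub>v d))) * t\<^sup>2"
    for t
    unfolding cone_form_vCons[OF smult_carrier_vec[THEN iffD2, OF d]]
      quadratic_form_smult[OF F_carrier d]
    using d p_carrier by (simp add: algebra_simps)
  have "eventually (\<lambda>t. 0 \<le> cone_form (vCons 1 (t \<cdot>\<^sub>v d))) at_top"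
    unfolding cone_form_ray using growth by (intro eventually_quadratic_nonneg) auto
  moreover have "eventually (\<lambda>t. 0 \<le> a + (b \<bullet> d) * t + 0 * t\<^sup>2) at_top"
    using bd by (intro eventually_quadratic_nonneg) auto
  ultimately obtain t where "0 \<le> cone_form (vCons 1 (t \<cdot>\<^sub>v d))" "0 \<le> a + (b \<bullet> d) * t"
    by (metis (mono_tags, lifting) add_0_right eventually_conj eventually_happens' mult_zero_left
        trivial_limit_at_top_linorder)
  then have "feasible (t \<cdot>\<^sub>v d)"
    using feasible_iff[of "t \<cdot>\<^sub>v d"] d b_carrier by (simp add: mult.commute)
  then show ?thesis using smult_carrier_vec[THEN iffD2, OF d] by blast
qed

lemma feasible_if_min_eigenvalue_neg:
  assumes "min_eigenvalue F < 0"
  shows "\<exists>u \<in> carrier_vec m. feasible u"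
proof -
  obtain d where d: "d \<in> carrier_vec m" "d \<noteq> 0\<^sub>v m" "F *\<^sub>v d = min_eigenvalue F \<cdot>\<^sub>v d"
    using sym_mat_min_eigenvalue(1)[OF F_carrier F_sym m_pos] F_carrier
    unfolding eigenvalue_def eigenvector_def by auto
  have dFd: "d \<bullet> (F *\<^sub>v d) < 0"
    using d assms real_scalar_prod_self_pos[OF d(1,2)] by (simp add: mult_neg_pos)
  have "b \<bullet> d \<noteq> 0"
  proof
    assume "b \<bullet> d = 0"
    then have "d \<bullet> (F *\<^sub>v d) = \<beta>\<^sup>2 * (d \<bullet> (S22 *\<^sub>v d))" using F_bilinear[OF d(1) d(1)] by simp
    then show False
      using dFd mult_pos_pos[OF zero_less_power[OF beta_pos, of 2]
          pos_def_matD(2)[OF S22_pd S22_carrier d(1,2)]]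
      by simp
  qed
  then consider "0 < b \<bullet> d" | "0 < b \<bullet> (- d)"
    using d(1) b_carrier by fastforce
  then show ?thesis
  proof cases
    case 1
    then show ?thesis using feasible_on_ray[OF d(1)] dFd by blast
  next
    case 2
    have "- d \<bullet> (F *\<^sub>v - d) = d \<bullet> (F *\<^sub>v d)"
      using d(1) F_carrier by (simp add: mult_mat_vec_uminus)
    then show ?thesis using feasible_on_ray[of "- d"] 2 d(1) dFd by simp
  qed
qed

lemma F_kernel_vector:
  assumes "eigenvalue F 0"
  obtains d where "d \<in> carrier_vec m" "S22 *\<^sub>v d = b" "b \<bullet> d = \<beta>\<^sup>2"
proof -
  obtain d0 where d0: "d0 \<in> carrier_vec m" "d0 \<noteq> 0\<^sub>v m" "F *\<^sub>v d0 = 0 \<cdot>\<^sub>v d0"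
    using assms F_carrier unfolding eigenvalue_def eigenvector_def by auto
  then have F_d0: "F *\<^sub>v d0 = 0\<^sub>v m" by (intro eq_vecI) auto
  have S22_d0: "\<beta>\<^sup>2 * (S22 *\<^sub>v d0) $ i = (b \<bullet> d0) * b $ i" if "i < m" for i
    using arg_cong[OF F_d0, of "\<lambda>v. v $ i"] that S22_carrier b_carrier
    unfolding F_mult_vec[OF d0(1)] by simp
  have "d0 \<bullet> (F *\<^sub>v d0) = 0" using d0(1) F_d0 by simp
  then have "\<beta>\<^sup>2 * (d0 \<bullet> (S22 *\<^sub>v d0)) = (b \<bullet> d0)\<^sup>2"
    unfolding F_bilinear[OF d0(1) d0(1)] by (simp add: power2_eq_square)
  then have bd0: "b \<bullet> d0 \<noteq> 0"
    using pos_def_matD(2)[OF S22_pd S22_carrier d0(1,2)] beta_pos by auto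
  define d where "d = (\<beta>\<^sup>2 / (b \<bullet> d0)) \<cdot>\<^sub>v d0"
  show thesis
  proof (rule that)
    show d: "d \<in> carrier_vec m" unfolding d_def using d0(1) by simp
    show "S22 *\<^sub>v d = b"
    proof (rule eq_vecI)
      fix i assume "i < dim_vec b"
      then have "i < m" using b_carrier by simp
      then show "(S22 *\<^sub>v d) $ i = b $ i"
        unfolding d_def using S22_d0[of i] S22_carrier d0(1) bd0
        by (simp add: mult_mat_vec field_simps)
    qed (use S22_carrier b_carrier in simp)
    show "b \<bullet> d = \<beta>\<^sup>2" unfolding d_def using b_carrier d0(1) bd0 by simp
  qed
qed

lemma F_form_kernel_vector:
  assumes d: "d \<in> carrier_vec m" and "S22 *\<^sub>v d = b" and "b \<bullet> d = \<beta>\<^sup>2"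
  shows "d \<bullet> (F *\<^sub>v d) = 0"
  using F_bilinear[OF d d] assms comm_scalar_prod[OF d b_carrier] by (simp add: power2_eq_square)

lemma s12_kernel_vector:
  assumes d: "d \<in> carrier_vec m" and S22_d: "S22 *\<^sub>v d = b"
  shows "b \<bullet> (inv_of S22 *\<^sub>v s12) = s12 \<bullet> d"
proof -
  have "inv_of S22 *\<^sub>v s12 \<in> carrier_vec m"
    using pos_def_mat_inv_of[OF S22_pd S22_carrier] s12_carrier by simp
  then have "b \<bullet> (inv_of S22 *\<^sub>v s12) = d \<bullet> (S22 *\<^sub>v (inv_of S22 *\<^sub>v s12))"
    using transpose_vec_mult_scalar[OF S22_carrier _ d] S22_sym S22_d by simp
  then show ?thesis
    using mult_inv_of_mult_vec[OF S22_pd S22_carrier s12_carrier] comm_scalar_prod[OF d s12_carrier]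
    by simp
qed

lemma feasible_if_min_eigenvalue_zero:
  assumes "min_eigenvalue F = 0" and cond: "0 < a - b \<bullet> (inv_of S22 *\<^sub>v s12)"
  shows "\<exists>u \<in> carrier_vec m. feasible u"
proof -
  have "eigenvalue F 0" using sym_mat_min_eigenvalue(1)[OF F_carrier F_sym m_pos] assms(1) by simp
  then obtain d where d: "d \<in> carrier_vec m" "S22 *\<^sub>v d = b" "b \<bullet> d = \<beta>\<^sup>2"
    using F_kernel_vector by blast
  have "p \<bullet> d = \<beta>\<^sup>2 * (s12 \<bullet> d - a)"
    using p_scalar_prod[OF d(1)] d(3) by (simp add: algebra_simps)
  then have "p \<bullet> d < 0" using cond s12_kernel_vector[OF d(1,2)] beta_pos by (simp add: mult_pos_neg)
  then show ?thesis
    using feasible_on_ray[OF d(1)] F_form_kernel_vector[OF d] d(3) beta_pos by simp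
qed

text \<open>For the kernel vector d of F normalised by S22 d = b, the vector vCons 0 d has S-norm \<beta>
  and S-inner product s12 d + b u with vCons 1 u; strict Cauchy-Schwarz together with the
  feasibility of u gives s12 d < a.\<close>
lemma min_eigenvalue_zero_condition_if_feasible:
  assumes "min_eigenvalue F = 0" and u: "u \<in> carrier_vec m" and feas: "feasible u"
  shows "0 < a - b \<bullet> (inv_of S22 *\<^sub>v s12)"
proof -
  have "eigenvalue F 0" using sym_mat_min_eigenvalue(1)[OF F_carrier F_sym m_pos] assms(1) by simp
  then obtain d where d: "d \<in> carrier_vec m" "S22 *\<^sub>v d = b" "b \<bullet> d = \<beta>\<^sup>2"
    using F_kernel_vector by blast
  define x where "x = vCons 0 d"
  define y where "y = vCons 1 u"
  have x: "x \<in> carrier_vec (Suc m)" and y: "y \<in> carrier_vec (Suc m)"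
    unfolding x_def y_def using d u by auto
  have Sx: "S *\<^sub>v x = vCons (s12 \<bullet> d) b"
    unfolding x_def S_mult_vCons[OF d(1)] d(2) using s12_carrier b_carrier by auto
  have xSy: "x \<bullet> (S *\<^sub>v y) = s12 \<bullet> d + b \<bullet> u"
    using transpose_vec_mult_scalar[OF S_carrier y x] S_sym Sx unfolding y_def by simp
  have xSx: "x \<bullet> (S *\<^sub>v x) = \<beta>\<^sup>2"
    unfolding Sx using d comm_scalar_prod[OF d(1) b_carrier] by (simp add: x_def)
  have indep: "x + t \<cdot>\<^sub>v y \<noteq> 0\<^sub>v (Suc m)" for t
  proof
    assume 0: "x + t \<cdot>\<^sub>v y = 0\<^sub>v (Suc m)"
    have "(x + t \<cdot>\<^sub>v y) $ 0 = 0" using 0 by simp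
    then have "t = 0" using x y by (simp add: x_def y_def)
    moreover have "x + 0 \<cdot>\<^sub>v y = x" using x y by (intro eq_vecI) auto
    ultimately have "x = 0\<^sub>v (Suc m)" using 0 by simp
    then have "d = 0\<^sub>v m" by (simp add: x_def zero_vec_Suc)
    then show False using d(3) b_carrier beta_pos by simp
  qed
  have "y \<noteq> 0\<^sub>v (Suc m)" unfolding y_def by (simp add: zero_vec_Suc)
  then have "(s12 \<bullet> d + b \<bullet> u)\<^sup>2 < \<beta>\<^sup>2 * (y \<bullet> (S *\<^sub>v y))"
    using pos_def_mat_cauchy_schwarz_strict[OF S_pd S_carrier x y _ indep] xSy xSx by simp
  also have "\<dots> \<le> (a + b \<bullet> u)\<^sup>2" using feas feasible_iff[OF u] unfolding cone_form_vCons_one y_def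
    by simp
  finally have "s12 \<bullet> d + b \<bullet> u < a + b \<bullet> u"
    by (rule power2_less_imp_less) (use feasible_imp_pos[OF u feas] in simp)
  then show ?thesis using s12_kernel_vector[OF d(1,2)] by simp
qed

theorem exists_feasible_iff:
  "(\<exists>u \<in> carrier_vec m. feasible u) \<longleftrightarrow>
    \<beta>\<^sup>2 \<le> w \<bullet> (inv_of S *\<^sub>v w) \<and>
    (min_eigenvalue F < 0 \<or>
     (0 < min_eigenvalue F \<and> 0 \<le> a - b \<bullet> (inv_of F *\<^sub>v p)) \<or>
     (min_eigenvalue F = 0 \<and> 0 < a - b \<bullet> (inv_of S22 *\<^sub>v s12)))"
  (is "?feasible \<longleftrightarrow> ?inv_form \<and> ?cases")
proof -
  have u_opt: "a + b \<bullet> u_opt = a - b \<bullet> (inv_of F *\<^sub>v p)" if "0 < min_eigenvalue F"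
    using pos_def_mat_inv_of[OF F_pd_if_min_eigenvalue_pos[OF that] F_carrier] p_carrier b_carrier
    unfolding u_opt_def by simp
  show ?thesis
  proof
    assume ?feasible
    then obtain u where u: "u \<in> carrier_vec m" "feasible u" by blast
    have ?cases
    proof (cases "min_eigenvalue F" "0::real" rule: linorder_cases)
      case equal
      then show ?thesis using min_eigenvalue_zero_condition_if_feasible[OF equal u] by simp
    next
      case greater
      then show ?thesis
        using u_opt_nonneg_if_feasible[OF F_pd_if_min_eigenvalue_pos[OF greater] u] u_opt by simp
    qed simp
    then show "?inv_form \<and> ?cases" using inv_form_ge_if_feasible[OF u] by blast
  next
    assume conds: "?inv_form \<and> ?cases"
    then consider "min_eigenvalue F < 0"
      | "0 < min_eigenvalue F" "0 \<le> a - b \<bullet> (inv_of F *\<^sub>v p)"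
      | "min_eigenvalue F = 0" "0 < a - b \<bullet> (inv_of S22 *\<^sub>v s12)"
      by blast
    then show ?feasible
    proof cases
      case 2
      note F_pd = F_pd_if_min_eigenvalue_pos[OF 2(1)]
      then show ?thesis
        using feasible_u_opt[OF F_pd] u_opt_carrier[OF F_pd] conds u_opt 2 by auto
    qed (use feasible_if_min_eigenvalue_neg feasible_if_min_eigenvalue_zero in auto)
  qed
qed

end

section \<open>The GP-CBF-SOCP\<close>

lemma Sigma_B_carrier: "Sigma_B m k \<sigma>n N xs us x \<in> carrier_mat (Suc m) (Suc m)"
  unfolding Sigma_B_def by (intro carrier_matI) (simp_all add: K_ss_def K_sY_def)

context
  fixes m N :: nat and k :: "nat \<Rightarrow> 'a \<Rightarrow> 'a \<Rightarrow> real" and \<sigma>n :: real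
    and xs :: "nat \<Rightarrow> 'a" and us :: "nat \<Rightarrow> real vec" and x :: 'a
  assumes Sigma_pd: "pos_def_mat (Sigma_B m k \<sigma>n N xs us x)"
begin

lemma col_Sig_LgB_half:
  assumes "j < m"
  shows "col (Sig_LgB_half m k \<sigma>n N xs us x) j = col (sqrt_pd (Sigma_B m k \<sigma>n N xs us x)) (Suc j)"
  using sqrt_pd(1)[OF Sigma_pd Sigma_B_carrier] assms unfolding Sig_LgB_half_def
  by (intro eq_vecI) auto

lemma Sig_LgB_eq:
  "Sig_LgB m k \<sigma>n N xs us x = mat m m (\<lambda>(i, j). Sigma_B m k \<sigma>n N xs us x $$ (Suc i, Suc j))"
  (is "_ = ?M")
proof (rule eq_matI)
  fix i j assume "i < dim_row ?M" and "j < dim_col ?M"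
  then show "Sig_LgB m k \<sigma>n N xs us x $$ (i, j) = ?M $$ (i, j)"
    unfolding Sig_LgB_def
    using col_Sig_LgB_half sqrt_pd_col_scalar_prod[OF Sigma_pd Sigma_B_carrier]
    by (simp add: Sig_LgB_half_def)
qed (simp_all add: Sig_LgB_def Sig_LgB_half_def)

lemma Sig_half_mult_vec_eq:
  "transpose_mat (Sig_LgB_half m k \<sigma>n N xs us x) *\<^sub>v Sig_LfB_half m k \<sigma>n N xs us x
    = vec m (\<lambda>j. Sigma_B m k \<sigma>n N xs us x $$ (Suc j, 0))"
  (is "?lhs = ?v")
proof (rule eq_vecI)
  fix j assume "j < dim_vec ?v"
  then show "?lhs $ j = ?v $ j"
    unfolding Sig_LfB_half_def
    using col_Sig_LgB_half sqrt_pd_col_scalar_prod[OF Sigma_pd Sigma_B_carrier]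
    by (simp add: Sig_LgB_half_def)
qed (simp add: Sig_LgB_half_def)

end

lemma socp_constraint_iff:
  assumes u: "u \<in> carrier_vec m"
  shows "socp_constraint m k \<sigma>n N xs us z \<beta> \<gamma> B DB ft gt x u \<longleftrightarrow>
    \<beta> * sqrt (vCons 1 u \<bullet> (Sigma_B m k \<sigma>n N xs us x *\<^sub>v vCons 1 u))
      \<le> (LfB_hat m k \<sigma>n N xs us z DB ft x + \<gamma> (B x)) + LgB_hat m k \<sigma>n N xs us z DB gt x \<bullet> u"
proof -
  define mB where "mB = m_B m k \<sigma>n N xs us z x"
  have "dim_vec mB = Suc m" unfolding mB_def m_B_def by (simp add: K_sY_def)
  then have mB: "mB = vCons (mB $ 0) (vec m (\<lambda>i. mB $ (i + 1)))"
    by (intro eq_vecI) (auto simp: vec_index_vCons)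
  have mu: "mu_B m k \<sigma>n N xs us z x u = mB $ 0 + vec m (\<lambda>i. mB $ (i + 1)) \<bullet> u"
    unfolding mu_B_def mB_def[symmetric] yvec_def by (subst mB) simp
  have b: "LgB_hat m k \<sigma>n N xs us z DB gt x \<bullet> u
      = Lie_gt m DB gt x \<bullet> u + vec m (\<lambda>i. mB $ (i + 1)) \<bullet> u"
    unfolding LgB_hat_def mB_def[symmetric]
    by (rule add_scalar_prod_distrib[of _ m]) (use u in \<open>auto simp: Lie_gt_def\<close>)
  show ?thesis
    unfolding socp_constraint_def sigma_B_def mu b LfB_hat_def mB_def[symmetric] yvec_def
    by linarith
qed

theorem theorem2:
  fixes m N :: nat
    and k :: "nat \<Rightarrow> 'a::euclidean_space \<Rightarrow> 'a \<Rightarrow> real"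
    and \<sigma>n \<beta> :: real
    and xs :: "nat \<Rightarrow> 'a" and us :: "nat \<Rightarrow> real vec" and z :: "real vec"
    and \<gamma> :: "real \<Rightarrow> real" and B :: "'a \<Rightarrow> real" and DB :: "'a \<Rightarrow> real"
    and ft :: "'a \<Rightarrow> 'a" and gt :: "'a \<Rightarrow> nat \<Rightarrow> 'a"
    and X :: "'a set" and x :: 'a
  assumes m_pos: "m \<ge> 1"
    and us_dim: "\<forall>j<N. us j \<in> carrier_vec m"
    and z_dim: "z \<in> carrier_vec N"
    and sigma_n_pos: "\<sigma>n > 0"
    and beta_pos: "\<beta> > 0"
    and gamma_K: "ext_class_K_inf \<gamma>"
    and x_in: "x \<in> X"
    and B_deriv: "(B has_derivative DB) (at x)"
    and Sigma_pd: "pos_def_mat (Sigma_B m k \<sigma>n N xs us x)"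
  shows "socp_feasible m k \<sigma>n N xs us z \<beta> \<gamma> B DB ft gt x \<longleftrightarrow>
   (let a = LfB_hat m k \<sigma>n N xs us z DB ft x + \<gamma> (B x);
        b = LgB_hat m k \<sigma>n N xs us z DB gt x;
        w = vCons a b;
        \<Sigma> = Sigma_B m k \<sigma>n N xs us x;
        sf = Sig_LfB_half m k \<sigma>n N xs us x;
        Sg = Sig_LgB_half m k \<sigma>n N xs us x;
        SgB = Sig_LgB m k \<sigma>n N xs us x;
        F = F_mat m k \<sigma>n N xs us z \<beta> DB gt x;
        lam = min_eigenvalue F
    in scalar_prod w (inv_of \<Sigma> *\<^sub>v w) \<ge> \<beta>\<^sup>2 \<and>
       (lam < 0 \<or>
        (lam > 0 \<and>
          a - scalar_prod b (inv_of F *\<^sub>v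
                 (\<beta>\<^sup>2 \<cdot>\<^sub>v (transpose_mat Sg *\<^sub>v sf) - a \<cdot>\<^sub>v b)) \<ge> 0) \<or>
        (lam = 0 \<and>
          a - scalar_prod b (inv_of SgB *\<^sub>v (transpose_mat Sg *\<^sub>v sf)) > 0)))"
proof -
  define \<Sigma> where "\<Sigma> = Sigma_B m k \<sigma>n N xs us x"
  define a where "a = LfB_hat m k \<sigma>n N xs us z DB ft x + \<gamma> (B x)"
  define b where "b = LgB_hat m k \<sigma>n N xs us z DB gt x"
  interpret c: socp m \<Sigma> a \<beta> b
    using m_pos Sigma_B_carrier Sigma_pd beta_pos unfolding \<Sigma>_def b_def
    by unfold_locales (auto simp: LgB_hat_def Lie_gt_def)
  have feasible:
    "socp_feasible m k \<sigma>n N xs us z \<beta> \<gamma> B DB ft gt x \<longleftrightarrow> (\<exists>u \<in> carrier_vec m. c.feasible u)"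
    unfolding socp_feasible_def c.feasible_def unfolding \<Sigma>_def a_def b_def
    by (simp add: socp_constraint_iff)
  have S22: "Sig_LgB m k \<sigma>n N xs us x = c.S22"
    unfolding c.S22_def unfolding \<Sigma>_def by (rule Sig_LgB_eq[OF Sigma_pd])
  have s12: "transpose_mat (Sig_LgB_half m k \<sigma>n N xs us x) *\<^sub>v Sig_LfB_half m k \<sigma>n N xs us x = c.s12"
    unfolding c.s12_def unfolding \<Sigma>_def by (rule Sig_half_mult_vec_eq[OF Sigma_pd])
  have F: "F_mat m k \<sigma>n N xs us z \<beta> DB gt x = c.F"
    unfolding F_mat_def c.F_def unfolding S22 b_def ..
  show ?thesis
    unfolding Let_def feasible S22 s12 F a_def[symmetric] b_def[symmetric] \<Sigma>_def[symmetric]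
    using c.exists_feasible_iff unfolding c.w_def c.p_def .
qed

end
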